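(* Let $\mathcal{X}$ be a compact Polish space, $\mathcal{L}:\mathcal{X}\to[-\infty,\infty)$ upper semicontinuous, $P\in\mathcal{P}(\mathcal{X})$, $D$ a pre-divergence such that $Q\mapsto D(Q\|P)$ is lower semicontinuous, and $c$ a cost function with $c(x_1,x_2)=0$ if and only if $x_1=x_2$. For $r>0$ let $c_r=rc$. Then for every $\epsilon>0$, \[\lim_{r\to\infty}\sup_{Q:D^{c_r}(Q\|P)\leq \epsilon}E_Q[\mathcal{L}]=\sup_{Q:D(Q\|P)\leq\epsilon}E_Q[\mathcal{L}].\] Moreover, if $\{\mathcal{L}_\theta\}_{\theta\in\Theta}$ is a family of upper semicontinuous functions $\mathcal{X}\to[-\infty,\infty)$, then \[\lim_{r\to\infty}\inf_{\theta\in\Theta}\sup_{Q:D^{c_r}(Q\|P)\leq \epsilon}E_Q[\mathcal{L}_\theta]=\inf_{\theta\in\Theta}\sup_{Q:D(Q\|P)\leq\epsilon}E_Q[\mathcal{L}_\theta].\]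
   Context: $\mathcal{P}(\mathcal{X})$ is the set of Borel probability measures on $\mathcal{X}$ with the weak topology; suprema are over $Q\in\mathcal{P}(\mathcal{X})$. A pre-divergence is $D:\mathcal{P}(\mathcal{X})\times\mathcal{P}(\mathcal{X})\to[0,\infty]$ with $D(\mu\|\mu)=0$ for all $\mu$. A cost function is a lower semicontinuous $c:\mathcal{X}\times\mathcal{X}\to[0,\infty]$; for a cost function $c'$ its OT cost is $C'(\mu,\nu)=\inf\{\int c'\,d\pi:\pi_1=\mu,\pi_2=\nu\}$ and $D^{c'}(\nu\|\mu)=\inf_{\eta\in\mathcal{P}(\mathcal{X})}\{D(\eta\|\mu)+C'(\eta,\nu)\}$. *)

theory Defs
  imports "HOL-Probability.Probability"
begin

definition Prob :: "'a::topological_space measure set" where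
  "Prob = {M. prob_space M \<and> sets M = sets borel}"

definition usc :: "('a::topological_space \<Rightarrow> 'b::linorder_topology) \<Rightarrow> bool" where
  "usc f \<longleftrightarrow> (\<forall>t. open {x. f x < t})"

definition lsc :: "('a::topological_space \<Rightarrow> 'b::linorder_topology) \<Rightarrow> bool" where
  "lsc f \<longleftrightarrow> (\<forall>t. open {x. t < f x})"

definition weak_topology :: "'a::topological_space measure topology" where
  "weak_topology = topology_generated_by
     {{Q \<in> Prob. (\<integral>x. f x \<partial>Q) \<in> U} | (f :: 'a \<Rightarrow> real) U.
        continuous_on UNIV f \<and> bounded (range f) \<and> open U}"

definition weak_lsc :: "('a::topological_space measure \<Rightarrow> ennreal) \<Rightarrow> bool" where
  "weak_lsc F \<longleftrightarrow> (\<forall>t. openin weak_topology {Q \<in> Prob. t < F Q})"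

definition pre_divergence :: "('a::topological_space measure \<Rightarrow> 'a measure \<Rightarrow> ennreal) \<Rightarrow> bool" where
  "pre_divergence D \<longleftrightarrow> (\<forall>\<mu>\<in>Prob. D \<mu> \<mu> = 0)"

definition cost_function :: "('a::topological_space \<times> 'a \<Rightarrow> ennreal) \<Rightarrow> bool" where
  "cost_function c \<longleftrightarrow> lsc c"

definition couplings :: "'a::topological_space measure \<Rightarrow> 'a measure \<Rightarrow> ('a \<times> 'a) measure set" where
  "couplings \<mu> \<nu> = {\<pi> \<in> Prob. distr \<pi> borel fst = \<mu> \<and> distr \<pi> borel snd = \<nu>}"

definition OT_cost :: "('a::topological_space \<times> 'a \<Rightarrow> ennreal) \<Rightarrow> 'a measure \<Rightarrow> 'a measure \<Rightarrow> ennreal" where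
  "OT_cost c \<mu> \<nu> = (INF \<pi>\<in>couplings \<mu> \<nu>. \<integral>\<^sup>+ z. c z \<partial>\<pi>)"

definition OT_reg_div ::
  "('a::topological_space measure \<Rightarrow> 'a measure \<Rightarrow> ennreal) \<Rightarrow> ('a \<times> 'a \<Rightarrow> ennreal)
     \<Rightarrow> 'a measure \<Rightarrow> 'a measure \<Rightarrow> ennreal" where
  "OT_reg_div D c \<nu> \<mu> = (INF \<eta>\<in>Prob. D \<eta> \<mu> + OT_cost c \<eta> \<nu>)"

text \<open>E_Q[L] = E_Q[L^+] - E_Q[L^-] (for L bounded above this is well defined in [-\<infinity>,\<infinity>)).\<close>

definition expect :: "'a measure \<Rightarrow> ('a \<Rightarrow> ereal) \<Rightarrow> ereal" where
  "expect Q L = enn2ereal (\<integral>\<^sup>+ x. e2ennreal (L x) \<partial>Q) - enn2ereal (\<integral>\<^sup>+ x. e2ennreal (- L x) \<partial>Q)"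

end

theory Submission
  imports Defs
begin

(* Since the diagonal coupling costs nothing, D^{c_r}(Q||P) <= D(Q||P), and D^{c_r} grows with r;
   so the suprema on the left decrease in r and stay above the right-hand side. Conversely, a
   near-maximiser Q_n for r = n comes with some eta_n such that D(eta_n||P) <= eps + 1/n and the
   transport cost from eta_n to Q_n is O(1/n). As c is bounded below away from the diagonal of
   the compact space, a weakly convergent subsequence of (Q_n) (Prokhorov) forces (eta_n) to the
   same limit Q, which is then feasible for D by lower semicontinuity, while upper semicontinuity
   of L gives E_Q[L] >= limsup E_{Q_n}[L]. The statement for the family L_theta follows because
   an infimum of functions converging from above converges to the infimum of the limits. *)

section \<open>Expectations of functions bounded above\<close>

lemma e2ennreal_diff_add:
  fixes z :: ereal
  assumes "z \<le> ereal M" "0 \<le> M"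
  shows "e2ennreal (ereal M - z) + e2ennreal z = ennreal M + e2ennreal (- z)"
proof (cases z)
  case (real r)
  then show ?thesis
    using assms
      by (cases "0 \<le> r") (simp_all add: e2ennreal_ereal ennreal_plus[symmetric] ennreal_neg)
qed (use assms in simp_all)

lemma enn2ereal_diff_eq_of_add_eq:
  fixes A B C :: ennreal
  assumes eq: "A + B = ennreal M + C" and B: "B = ennreal b" "0 \<le> b" "b \<le> M"
  shows "enn2ereal B - enn2ereal C = ereal M - enn2ereal A"
proof (cases "C = \<infinity>")
  case True
  then have "A = \<infinity>" using eq B by (simp add: ennreal_add_eq_top)
  then show ?thesis using True B by simp
next
  case False
  then obtain c where c: "C = ennreal c" "0 \<le> c" by (cases C rule: ennreal_cases) auto
  then have "A \<noteq> \<infinity>" using eq B by (auto simp: ennreal_add_eq_top simp flip: ennreal_plus)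
  then obtain a where a: "A = ennreal a" "0 \<le> a" by (cases A rule: ennreal_cases) auto
  have "ennreal (a + b) = ennreal (M + c)" using eq a B c by (simp add: ennreal_plus)
  then have "a + b = M + c" using a B c by (subst (asm) ennreal_inj) auto
  then show ?thesis using a B c by (simp add: enn2ereal_ennreal)
qed

lemma expect_eq_minus_nn_integral:
  assumes "prob_space Q" and [measurable]: "f \<in> borel_measurable Q"
    and le: "\<And>x. f x \<le> ereal M" and "0 \<le> M"
  shows "expect Q f = ereal M - enn2ereal (\<integral>\<^sup>+ x. e2ennreal (ereal M - f x) \<partial>Q)"
proof -
  interpret prob_space Q by fact
  define A where "A = (\<integral>\<^sup>+ x. e2ennreal (ereal M - f x) \<partial>Q)"
  define B where "B = (\<integral>\<^sup>+ x. e2ennreal (f x) \<partial>Q)"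
  define C where "C = (\<integral>\<^sup>+ x. e2ennreal (- f x) \<partial>Q)"
  have "A + B = (\<integral>\<^sup>+ x. e2ennreal (ereal M - f x) + e2ennreal (f x) \<partial>Q)"
    unfolding A_def B_def by (rule nn_integral_add[symmetric]) auto
  also have "\<dots> = (\<integral>\<^sup>+ x. ennreal M + e2ennreal (- f x) \<partial>Q)"
    using e2ennreal_diff_add[OF le \<open>0 \<le> M\<close>] by simp
  also have "\<dots> = ennreal M + C"
    unfolding C_def by (subst nn_integral_add) (auto simp: emeasure_space_1)
  finally have eq: "A + B = ennreal M + C" .
  have "B \<le> (\<integral>\<^sup>+ x. ennreal M \<partial>Q)"
    unfolding B_def using e2ennreal_mono[OF le]
      by (intro nn_integral_mono) (simp add: e2ennreal_ereal)
  then have "B \<le> ennreal M" by (simp add: emeasure_space_1)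
  then obtain b where "B = ennreal b" "0 \<le> b" "b \<le> M"
    using \<open>0 \<le> M\<close> by (cases B rule: ennreal_cases) (auto simp: top_unique)
  then have "enn2ereal B - enn2ereal C = ereal M - enn2ereal A"
    by (intro enn2ereal_diff_eq_of_add_eq[OF eq])
  then show ?thesis unfolding expect_def A_def B_def C_def .
qed

lemma expect_ereal:
  assumes "prob_space Q" and [measurable]: "g \<in> borel_measurable Q"
    and bnd: "\<And>x. \<bar>g x\<bar> \<le> K"
  shows "expect Q (\<lambda>x. ereal (g x)) = ereal (\<integral>x. g x \<partial>Q)"
proof -
  interpret prob_space Q by fact
  have "0 \<le> K" using bnd[of undefined] by linarith
  have int: "integrable Q g"
    by (rule integrable_const_bound[where B=K]) (use bnd in auto)
  have le: "(\<integral>x. g x \<partial>Q) \<le> K"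
    using integral_mono[OF int, of "\<lambda>_. K"] bnd by (simp add: prob_space abs_le_iff)
  have "(\<integral>\<^sup>+ x. e2ennreal (ereal K - ereal (g x)) \<partial>Q) = (\<integral>\<^sup>+ x. ennreal (K - g x) \<partial>Q)"
    by simp
  also have "\<dots> = ennreal (\<integral>x. K - g x \<partial>Q)"
    by (rule nn_integral_eq_integral) (use int bnd in \<open>auto simp: abs_le_iff\<close>)
  also have "(\<integral>x. K - g x \<partial>Q) = K - (\<integral>x. g x \<partial>Q)"
    using int by (simp add: prob_space)
  finally show ?thesis
    using expect_eq_minus_nn_integral[of Q "\<lambda>x. ereal (g x)" K] bnd \<open>0 \<le> K\<close> le
    by (simp add: prob_space_axioms abs_le_iff enn2ereal_ennreal)
qed

lemma expect_mono:
  assumes "prob_space Q" and [measurable]: "f \<in> borel_measurable Q" "g \<in> borel_measurable Q"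
    and fg: "\<And>x. f x \<le> g x" and le: "\<And>x. g x \<le> ereal M" and "0 \<le> M"
  shows "expect Q f \<le> expect Q g"
proof -
  have "(\<integral>\<^sup>+ x. e2ennreal (ereal M - g x) \<partial>Q) \<le> (\<integral>\<^sup>+ x. e2ennreal (ereal M - f x) \<partial>Q)"
    by (intro nn_integral_mono e2ennreal_mono ereal_minus_mono fg order.refl)
  then have "ereal M - enn2ereal (\<integral>\<^sup>+ x. e2ennreal (ereal M - f x) \<partial>Q)
      \<le> ereal M - enn2ereal (\<integral>\<^sup>+ x. e2ennreal (ereal M - g x) \<partial>Q)"
    by (intro ereal_minus_mono order.refl) (simp add: less_eq_ennreal.rep_eq)
  then show ?thesis
    using expect_eq_minus_nn_integral[OF assms(1,2) order_trans[OF fg le] \<open>0 \<le> M\<close>]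
      expect_eq_minus_nn_integral[OF assms(1,3) le \<open>0 \<le> M\<close>] by simp
qed

lemma expect_INF_ge:
  assumes "prob_space Q" and [measurable]: "\<And>j. g j \<in> borel_measurable Q"
    and le: "\<And>j x. g j x \<le> ereal M" and "0 \<le> M"
    and dec: "\<And>x. decseq (\<lambda>j. g j x)"
    and y: "\<And>j. y \<le> expect Q (g j)"
  shows "y \<le> expect Q (\<lambda>x. INF j. g j x)"
proof -
  define A where "A j = (\<integral>\<^sup>+ x. e2ennreal (ereal M - g j x) \<partial>Q)" for j
  have mono_diff: "mono (\<lambda>j. ereal M - g j x)" for x
    using dec[of x] by (intro monoI ereal_minus_mono order.refl) (simp add: decseq_def)
  have "(SUP j. ereal M - g j x) = ereal M - (INF j. g j x)" for x
    by (rule SUP_ereal_minus_right) auto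
  then have sup_eq:
    "(SUP j. e2ennreal (ereal M - g j x)) = e2ennreal (ereal M - (INF j. g j x))" for x
    using sup_continuousD[OF sup_continuous_e2ennreal[OF sup_continuous_id] mono_diff[of x]] by simp
  have inc: "incseq (\<lambda>j x. e2ennreal (ereal M - g j x))"
    unfolding incseq_def le_fun_def by (metis e2ennreal_mono monoD mono_diff)
  have "(\<integral>\<^sup>+ x. e2ennreal (ereal M - (INF j. g j x)) \<partial>Q) = (SUP j. A j)"
    unfolding A_def sup_eq[symmetric] by (rule nn_integral_monotone_convergence_SUP[OF inc]) simp
  moreover have "mono A"
    unfolding A_def mono_def
    by (intro allI impI nn_integral_mono) (use inc in \<open>auto simp: incseq_def le_fun_def\<close>)
  ultimately have
    "enn2ereal (\<integral>\<^sup>+ x. e2ennreal (ereal M - (INF j. g j x)) \<partial>Q) = (SUP j. enn2ereal (A j))"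
    using sup_continuousD[OF sup_continuous_enn2ereal[OF sup_continuous_id]] by simp
  moreover have "(INF j. g j x) \<le> ereal M" for x
    by (rule INF_lower2[of 0]) (auto simp: le)
  ultimately have "expect Q (\<lambda>x. INF j. g j x) = ereal M - (SUP j. enn2ereal (A j))"
    using expect_eq_minus_nn_integral[OF assms(1) _ _ \<open>0 \<le> M\<close>] by simp
  also have "\<dots> = (INF j. ereal M - enn2ereal (A j))"
    by (rule INF_ereal_minus_right[symmetric]) auto
  finally show ?thesis
    using y expect_eq_minus_nn_integral[OF assms(1,2) le \<open>0 \<le> M\<close>] unfolding A_def
    by (auto intro: INF_greatest)
qed

section \<open>Semicontinuity\<close>

lemma usc_borel_measurable:
  fixes L :: "'a::topological_space \<Rightarrow> ereal"
  shows "usc L \<Longrightarrow> L \<in> borel_measurable borel"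
  by (rule borel_measurableI_less) (auto simp: usc_def)

lemma lsc_borel_measurable:
  fixes c :: "'a::topological_space \<Rightarrow> ennreal"
  shows "lsc c \<Longrightarrow> c \<in> borel_measurable borel"
  by (rule borel_measurableI_greater) (auto simp: lsc_def)

lemma usc_bounded_above:
  fixes L :: "'a::topological_space \<Rightarrow> ereal"
  assumes cpt: "compact (UNIV :: 'a set)" and "usc L" and fin: "\<And>x. L x \<noteq> \<infinity>"
  obtains M where "0 \<le> M" "\<And>x. L x \<le> ereal M"
proof -
  have "UNIV \<subseteq> (\<Union>n. {x. L x < ereal (real (n::nat))})"
    using fin less_PInf_Ex_of_nat by blast
  moreover have "\<And>n. open {x. L x < ereal (real (n::nat))}"
    using \<open>usc L\<close> unfolding usc_def by simp
  ultimately obtain C where C: "finite C" "UNIV \<subseteq> (\<Union>n\<in>C. {x. L x < ereal (real (n::nat))})"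
    using compactE_image[OF cpt, of UNIV "\<lambda>n. {x. L x < ereal (real (n::nat))}"] by metis
  have "L x \<le> ereal (real (Max (insert 0 C)))" for x
  proof -
    obtain n where "n \<in> C" "L x < ereal (real n)" using C by blast
    moreover have "n \<le> Max (insert 0 C)" using C(1) \<open>n \<in> C\<close> by simp
    ultimately show ?thesis by (metis less_imp_le of_nat_le_iff order_trans ereal_less_eq(3))
  qed
  then show ?thesis by (intro that[of "real (Max (insert 0 C))"]) auto
qed

lemma lsc_pos_lower_bound:
  fixes c :: "'a::topological_space \<Rightarrow> ennreal"
  assumes S: "compact S" and "lsc c" and pos: "\<And>z. z \<in> S \<Longrightarrow> 0 < c z"
  obtains m :: real where "0 < m" "\<And>z. z \<in> S \<Longrightarrow> ennreal m \<le> c z"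
proof -
  have "\<exists>n. ennreal (inverse (real (Suc n))) < c z" if "z \<in> S" for z
  proof (cases "c z")
    case (real r)
    then have "0 < r" using pos[OF that] by simp
    then obtain n where "inverse (real (Suc n)) < r" using reals_Archimedean by blast
    then show ?thesis using real \<open>0 < r\<close> ennreal_lessI by auto
  qed simp
  then have "S \<subseteq> (\<Union>n. {z. ennreal (inverse (real (Suc n))) < c z})"
    by blast
  moreover have "\<And>n. open {z. ennreal (inverse (real (Suc n))) < c z}"
    using \<open>lsc c\<close> unfolding lsc_def by simp
  ultimately obtain C where C: "finite C" "S \<subseteq> (\<Union>n\<in>C. {z. ennreal (inverse (real (Suc n))) < c z})"
    using compactE_image[OF S, of UNIV "\<lambda>n. {z. ennreal (inverse (real (Suc n))) < c z}"] by metis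
  define N where "N = Max (insert 0 C)"
  have "ennreal (inverse (real (Suc N))) \<le> c z" if zS: "z \<in> S" for z
  proof -
    obtain n where n: "n \<in> C" "ennreal (inverse (real (Suc n))) < c z" using C zS by blast
    have "n \<le> N" unfolding N_def using C(1) n(1) by simp
    then have "ennreal (inverse (real (Suc N))) \<le> ennreal (inverse (real (Suc n)))"
      by (intro ennreal_leI le_imp_inverse_le) auto
    then show ?thesis using n(2) by (rule order.trans[OF _ less_imp_le])
  qed
  then show ?thesis using that[of "inverse (real (Suc N))"] by simp
qed

definition lipschitz_majorant :: "real \<Rightarrow> ('a::metric_space \<Rightarrow> real) \<Rightarrow> 'a \<Rightarrow> real" where
  "lipschitz_majorant k h x = (SUP y. h y - k * dist x y)"

context
  fixes h :: "'a::metric_space \<Rightarrow> real" and k M :: real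
  assumes h_le: "\<And>y. h y \<le> M" and k: "0 \<le> k"
begin

lemma bdd_above_lipschitz_majorant: "bdd_above (range (\<lambda>y. h y - k * dist x y))"
  by (rule bdd_aboveI2[where M=M]) (use h_le k in \<open>smt (verit) mult_nonneg_nonneg zero_le_dist\<close>)

lemma lipschitz_majorant_upper: "h y - k * dist x y \<le> lipschitz_majorant k h x"
  unfolding lipschitz_majorant_def by (rule cSUP_upper[OF UNIV_I bdd_above_lipschitz_majorant])

lemma lipschitz_majorant_ge: "h x \<le> lipschitz_majorant k h x"
  using lipschitz_majorant_upper[of x x] by simp

lemma lipschitz_majorant_le_local:
  assumes "0 < r" "\<And>y. y \<in> ball x r \<Longrightarrow> h y \<le> t" "M - t \<le> k * r"
  shows "lipschitz_majorant k h x \<le> t"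
  unfolding lipschitz_majorant_def
proof (rule cSUP_least[OF UNIV_not_empty])
  fix y
  show "h y - k * dist x y \<le> t"
  proof (cases "y \<in> ball x r")
    case True
    then show ?thesis using assms(2) k by (smt (verit) mult_nonneg_nonneg zero_le_dist)
  next
    case False
    then have "k * r \<le> k * dist x y" using k by (simp add: mult_left_mono)
    then show ?thesis using h_le[of y] assms(3) by linarith
  qed
qed

lemma lipschitz_majorant_le: "lipschitz_majorant k h x \<le> M"
  unfolding lipschitz_majorant_def
proof (rule cSUP_least[OF UNIV_not_empty])
  fix y
  show "h y - k * dist x y \<le> M" using h_le[of y] k by (smt (verit) mult_nonneg_nonneg zero_le_dist)
qed

lemma lipschitz_majorant_lipschitz: "k-lipschitz_on UNIV (lipschitz_majorant k h)"
proof (rule lipschitz_onI)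
  have le: "lipschitz_majorant k h x \<le> lipschitz_majorant k h x' + k * dist x x'" for x x'
    unfolding lipschitz_majorant_def[of _ _ x]
  proof (rule cSUP_least[OF UNIV_not_empty])
    fix y
    have "k * dist x' y \<le> k * dist x x' + k * dist x y"
      using dist_triangle[of x' y x] k
        by (simp add: dist_commute distrib_left[symmetric] mult_left_mono)
    then show "h y - k * dist x y \<le> lipschitz_majorant k h x' + k * dist x x'"
      using lipschitz_majorant_upper[of y x'] by linarith
  qed
  fix x x' :: 'a
  show "dist (lipschitz_majorant k h x) (lipschitz_majorant k h x') \<le> k * dist x x'"
    using le[of x x'] le[of x' x] by (simp add: dist_real_def dist_commute abs_le_iff)
qed (rule k)

lemma lipschitz_majorant_mono:
  assumes "\<And>y. h' y \<le> h y" "k \<le> k'"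
  shows "lipschitz_majorant k' h' x \<le> lipschitz_majorant k h x"
  unfolding lipschitz_majorant_def[of k']
proof (rule cSUP_least[OF UNIV_not_empty])
  fix y
  have "k * dist x y \<le> k' * dist x y" using assms(2) by (simp add: mult_right_mono)
  then show "h' y - k' * dist x y \<le> lipschitz_majorant k h x"
    using assms(1)[of y] lipschitz_majorant_upper[of y x] by linarith
qed

end

lemma usc_eq_INF_lipschitz_majorant:
  fixes L :: "'a::metric_space \<Rightarrow> ereal" and h :: "nat \<Rightarrow> 'a \<Rightarrow> real"
  assumes usc: "usc L" and h_le: "\<And>j y. h j y \<le> M"
    and h_eq: "\<And>j y. ereal (h j y) = max (L y) (ereal (- real j))"
  shows "L x = (INF j. ereal (lipschitz_majorant (real j) (h j) x))"
proof (rule antisym)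
  show "L x \<le> (INF j. ereal (lipschitz_majorant (real j) (h j) x))"
  proof (rule INF_greatest)
    fix j
    have "L x \<le> ereal (h j x)" unfolding h_eq by simp
    also have "\<dots> \<le> ereal (lipschitz_majorant (real j) (h j) x)"
      using lipschitz_majorant_ge[of "h j" M "real j" x] h_le by simp
    finally show "L x \<le> ereal (lipschitz_majorant (real j) (h j) x)" .
  qed
  show "(INF j. ereal (lipschitz_majorant (real j) (h j) x)) \<le> L x"
  proof (rule ccontr)
    assume "\<not> (INF j. ereal (lipschitz_majorant (real j) (h j) x)) \<le> L x"
    then have "L x < (INF j. ereal (lipschitz_majorant (real j) (h j) x))" by simp
    from ereal_dense2[OF this] obtain t
      where t: "L x < ereal t" "ereal t < (INF j. ereal (lipschitz_majorant (real j) (h j) x))"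
      by blast
    have "open {y. L y < ereal t}" using usc unfolding usc_def by simp
    then obtain r where r: "0 < r" "ball x r \<subseteq> {y. L y < ereal t}"
      using t(1) unfolding open_contains_ball by blast
    obtain j :: nat where j: "max (- t) ((M - t) / r) \<le> real j"
      using real_arch_simple by blast
    have "h j y \<le> t" if "y \<in> ball x r" for y
    proof -
      have "L y < ereal t" using r(2) that by blast
      moreover have "ereal (- real j) \<le> ereal t" using j by simp
      ultimately have "ereal (h j y) \<le> ereal t" unfolding h_eq by simp
      then show ?thesis by simp
    qed
    moreover have "M - t \<le> real j * r"
      using j r(1) by (simp add: divide_le_eq mult.commute)
    ultimately have "lipschitz_majorant (real j) (h j) x \<le> t"
      using lipschitz_majorant_le_local[of "h j" M "real j" r x t] h_le r(1) by auto
    then have "(INF j. ereal (lipschitz_majorant (real j) (h j) x)) \<le> ereal t"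
      by (intro INF_lower2[of j]) auto
    then show False using t(2) by simp
  qed
qed

lemma usc_decseq_continuous_approx:
  fixes L :: "'a::metric_space \<Rightarrow> ereal"
  assumes usc: "usc L" and L_le: "\<And>x. L x \<le> ereal M" and "0 \<le> M"
  obtains g :: "nat \<Rightarrow> 'a \<Rightarrow> real" where
    "\<And>j. continuous_on UNIV (g j)" "\<And>j x. \<bar>g j x\<bar> \<le> M + real j" "\<And>j x. g j x \<le> M"
    "\<And>x. decseq (\<lambda>j. g j x)" "\<And>x. L x = (INF j. ereal (g j x))"
proof -
  define h where "h j y = real_of_ereal (max (L y) (ereal (- real j)))" for j :: nat and y
  have h_eq: "ereal (h j y) = max (L y) (ereal (- real j))" for j y
    using L_le[of y] unfolding h_def by (cases "L y") (auto simp: max_def)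
  have h_le: "h j y \<le> M" for j y
  proof -
    have "ereal (h j y) \<le> ereal M" unfolding h_eq using L_le[of y] \<open>0 \<le> M\<close> by simp
    then show ?thesis by simp
  qed
  have h_ge: "- real j \<le> h j y" for j y
  proof -
    have "ereal (- real j) \<le> ereal (h j y)" unfolding h_eq by simp
    then show ?thesis by simp
  qed
  have h_antimono: "h j' y \<le> h j y" if "j \<le> j'" for j j' y
  proof -
    have "ereal (h j' y) \<le> ereal (h j y)" unfolding h_eq using that by (intro max.mono) auto
    then show ?thesis by simp
  qed
  define g where "g j = lipschitz_majorant (real j) (h j)" for j
  have g_le: "g j x \<le> M" for j x
    unfolding g_def by (rule lipschitz_majorant_le[OF h_le]) simp
  have g_ge: "h j x \<le> g j x" for j x
    unfolding g_def by (rule lipschitz_majorant_ge[OF h_le]) simp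
  show ?thesis
  proof (rule that)
    show "continuous_on UNIV (g j)" for j
      unfolding g_def
      by (rule lipschitz_on_continuous_on[OF lipschitz_majorant_lipschitz[of "h j" M "real j"]])
        (use h_le in auto)
    show "\<bar>g j x\<bar> \<le> M + real j" for j x
      using g_le[of j x] g_ge[of j x] h_ge[of j x] \<open>0 \<le> M\<close> by linarith
    show "g j x \<le> M" for j x by (rule g_le)
    show "decseq (\<lambda>j. g j x)" for x
    proof (rule decseq_def[THEN iffD2], intro allI impI)
      fix j j' :: nat assume "j \<le> j'"
      then show "g j' x \<le> g j x"
        unfolding g_def by (intro lipschitz_majorant_mono[OF h_le] h_antimono) auto
    qed
    show "L x = (INF j. ereal (g j x))" for x
      unfolding g_def by (rule usc_eq_INF_lipschitz_majorant[OF usc h_le h_eq])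
  qed
qed

section \<open>Weak convergence of probability measures\<close>

lemma Prob_prob_space: "Q \<in> Prob \<Longrightarrow> prob_space Q"
  by (simp add: Prob_def)

lemma sets_Prob: "Q \<in> Prob \<Longrightarrow> sets Q = sets borel"
  by (simp add: Prob_def)

lemma measurable_sets_borel: "sets Q = sets borel \<Longrightarrow> f \<in> measurable borel N \<Longrightarrow> f \<in> measurable Q N"
  using measurable_cong_sets[of Q borel N N] by simp

lemma measurable_Prob: "Q \<in> Prob \<Longrightarrow> f \<in> measurable borel N \<Longrightarrow> f \<in> measurable Q N"
  by (rule measurable_sets_borel[OF sets_Prob])

definition weak_conv_seq :: "(nat \<Rightarrow> 'a::topological_space measure) \<Rightarrow> 'a measure \<Rightarrow> bool" where
  "weak_conv_seq Qs Q \<longleftrightarrow> (\<forall>f :: 'a \<Rightarrow> real. continuous_on UNIV f \<longrightarrow> bounded (range f) \<longrightarrow>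
     (\<lambda>k. \<integral>x. f x \<partial>Qs k) \<longlonglongrightarrow> (\<integral>x. f x \<partial>Q))"

lemma weak_conv_seqD:
  fixes f :: "'a::topological_space \<Rightarrow> real"
  shows "weak_conv_seq Qs Q \<Longrightarrow> continuous_on UNIV f \<Longrightarrow> bounded (range f) \<Longrightarrow>
     (\<lambda>k. \<integral>x. f x \<partial>Qs k) \<longlonglongrightarrow> (\<integral>x. f x \<partial>Q)"
  by (simp add: weak_conv_seq_def)

lemma weak_conv_seq_eventually_openin:
  assumes "openin weak_topology U" "Q \<in> U" and conv: "weak_conv_seq Qs Q"
    and Qs: "\<And>k. Qs k \<in> Prob"
  shows "eventually (\<lambda>k. Qs k \<in> U) sequentially"
proof -
  have "generate_topology_on {{Q \<in> Prob. (\<integral>x. f x \<partial>Q) \<in> U} | (f :: 'a \<Rightarrow> real) U.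
        continuous_on UNIV f \<and> bounded (range f) \<and> open U} U"
    using assms(1) unfolding weak_topology_def openin_topology_generated_by_iff .
  then show ?thesis using assms(2)
  proof induction
    case (Int a b)
    then show ?case by (auto intro: eventually_conj elim: eventually_mono)
  next
    case (UN K)
    then obtain k where "k \<in> K" "Q \<in> k" by auto
    with UN.IH[of k] show ?case by (auto elim: eventually_mono)
  next
    case (Basis s)
    then obtain f and V :: "real set" where s: "s = {Q \<in> Prob. (\<integral>x. f x \<partial>Q) \<in> V}"
      "continuous_on UNIV f" "bounded (range f)" "open V" by auto
    with Basis.prems have "(\<integral>x. f x \<partial>Q) \<in> V" by auto
    from topological_tendstoD[OF weak_conv_seqD[OF conv s(2,3)] s(4) this]
    show ?case using Qs s(1) by (auto elim: eventually_mono)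
  qed simp
qed

lemma weak_lsc_le_lim:
  assumes lsc: "weak_lsc F" and "Q \<in> Prob" "\<And>k. Qs k \<in> Prob" "weak_conv_seq Qs Q"
    and le: "\<And>k. F (Qs k) \<le> u k" and lim: "u \<longlonglongrightarrow> l"
  shows "F Q \<le> l"
proof (rule ccontr)
  assume "\<not> F Q \<le> l"
  then have "l < F Q" by simp
  then obtain t where t: "l < t" "t < F Q" using dense by blast
  have "openin weak_topology {Q \<in> Prob. t < F Q}" using lsc unfolding weak_lsc_def by blast
  then have "eventually (\<lambda>k. Qs k \<in> {Q \<in> Prob. t < F Q}) sequentially"
    by (rule weak_conv_seq_eventually_openin) (use assms(2-4) t(2) in auto)
  moreover have "eventually (\<lambda>k. u k < t) sequentially"
    using order_tendstoD(2)[OF lim t(1)] .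
  ultimately have "eventually (\<lambda>k. False) sequentially"
  proof eventually_elim
    case (elim k)
    then have "t < u k" using le[of k] by (auto intro: less_le_trans)
    then show False using elim by simp
  qed
  then show False by simp
qed

lemma expect_ge_of_weak_conv_usc:
  fixes L :: "'a::metric_space \<Rightarrow> ereal"
  assumes usc: "usc L" and L_le: "\<And>x. L x \<le> ereal M" and "0 \<le> M"
    and Q: "Q \<in> Prob" and Qs: "\<And>k. Qs k \<in> Prob" and conv: "weak_conv_seq Qs Q"
    and y: "\<And>k. y \<le> expect (Qs k) L"
  shows "y \<le> expect Q L"
proof -
  obtain g where g_cont: "\<And>j. continuous_on UNIV (g j)" and g_bnd: "\<And>j x. \<bar>g j x\<bar> \<le> M + real j"
    and g_le: "\<And>j x. g j x \<le> M" and g_dec: "\<And>x. decseq (\<lambda>j. g j x)"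
    and L_eq: "\<And>x. L x = (INF j. ereal (g j x))"
    using usc_decseq_continuous_approx[OF usc L_le \<open>0 \<le> M\<close>] by blast
  have g_meas: "g j \<in> borel_measurable borel" for j
    by (rule borel_measurable_continuous_onI[OF g_cont])
  have "y \<le> ereal (\<integral>x. g j x \<partial>Q)" for j
  proof (rule LIMSEQ_le_const)
    show "(\<lambda>k. ereal (\<integral>x. g j x \<partial>Qs k)) \<longlonglongrightarrow> ereal (\<integral>x. g j x \<partial>Q)"
      by (intro tendsto_ereal weak_conv_seqD[OF conv g_cont]) (use g_bnd in \<open>auto simp: bounded_iff\<close>)
    have "y \<le> ereal (\<integral>x. g j x \<partial>Qs k)" for k
    proof -
      have "y \<le> expect (Qs k) L" by (rule y)
      also have "\<dots> \<le> expect (Qs k) (\<lambda>x. ereal (g j x))"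
      proof (rule expect_mono[OF Prob_prob_space[OF Qs] _ _ _ _ \<open>0 \<le> M\<close>])
        show "L \<in> borel_measurable (Qs k)"
          by (rule measurable_Prob[OF Qs usc_borel_measurable[OF usc]])
        show "(\<lambda>x. ereal (g j x)) \<in> borel_measurable (Qs k)"
          using measurable_Prob[OF Qs g_meas] by simp
        show "L x \<le> ereal (g j x)" for x unfolding L_eq by (rule INF_lower) simp
        show "ereal (g j x) \<le> ereal M" for x using g_le by simp
      qed
      also have "\<dots> = ereal (\<integral>x. g j x \<partial>Qs k)"
        by (rule expect_ereal[OF Prob_prob_space[OF Qs] measurable_Prob[OF Qs g_meas] g_bnd])
      finally show ?thesis .
    qed
    then show "\<exists>N. \<forall>k\<ge>N. y \<le> ereal (\<integral>x. g j x \<partial>Qs k)" by blast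
  qed
  then have "y \<le> expect Q (\<lambda>x. ereal (g j x))" for j
    using expect_ereal[OF Prob_prob_space[OF Q] measurable_Prob[OF Q g_meas] g_bnd] by simp
  then have "y \<le> expect Q (\<lambda>x. INF j. ereal (g j x))"
    by (intro expect_INF_ge[OF Prob_prob_space[OF Q] _ _ \<open>0 \<le> M\<close>])
      (use measurable_Prob[OF Q g_meas] g_le g_dec in \<open>auto simp: decseq_def\<close>)
  moreover have "L = (\<lambda>x. INF j. ereal (g j x))" using L_eq by blast
  ultimately show ?thesis by simp
qed

section \<open>Couplings and optimal transport\<close>

lemma measurable_diagonal: "Q \<in> Prob \<Longrightarrow> (\<lambda>x. (x, x)) \<in> measurable Q borel"
  by (erule measurable_Prob) (intro borel_measurable_continuous_onI continuous_intros)

lemma borel_measurable_fst_snd: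
  "fst \<in> measurable (borel :: ('a::topological_space \<times> 'b::topological_space) measure) borel"
  "snd \<in> measurable (borel :: ('a::topological_space \<times> 'b::topological_space) measure) borel"
  by (simp_all add: borel_measurable_continuous_onI continuous_on_fst continuous_on_snd
      continuous_on_id)

lemma diagonal_coupling:
  assumes Q: "Q \<in> Prob"
  shows "distr Q borel (\<lambda>x. (x, x)) \<in> couplings Q Q"
proof -
  interpret prob_space Q using Q by (rule Prob_prob_space)
  note diag = measurable_diagonal[OF Q]
  have "distr (distr Q borel (\<lambda>x. (x, x))) borel p = Q" if "p = fst \<or> p = snd" for p :: "'a \<times> 'a \<Rightarrow> 'a"
  proof -
    have "p \<in> borel_measurable borel"
      using that borel_measurable_fst_snd by auto
    then have "distr (distr Q borel (\<lambda>x. (x, x))) borel p = distr Q borel (\<lambda>x. x)"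
      using distr_distr[OF _ diag, of p borel] that by (auto simp: comp_def)
    also have "\<dots> = Q" by (rule distr_id2[OF sets_Prob[OF Q, symmetric]])
    finally show ?thesis .
  qed
  moreover have "prob_space (distr Q borel (\<lambda>x. (x, x)))" by (rule prob_space_distr[OF diag])
  ultimately show ?thesis unfolding couplings_def Prob_def by simp
qed

lemma OT_cost_self:
  assumes Q: "Q \<in> Prob" and c_diag: "\<And>x. c (x, x) = 0" and c: "c \<in> borel_measurable borel"
  shows "OT_cost c Q Q = 0"
proof -
  have "(\<integral>\<^sup>+ z. c z \<partial>distr Q borel (\<lambda>x. (x, x))) = (\<integral>\<^sup>+ x. c (x, x) \<partial>Q)"
    by (rule nn_integral_distr[OF measurable_diagonal[OF Q]]) (simp add: c)
  then have "(\<integral>\<^sup>+ z. c z \<partial>distr Q borel (\<lambda>x. (x, x))) = 0" by (simp add: c_diag)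
  moreover have "OT_cost c Q Q \<le> (\<integral>\<^sup>+ z. c z \<partial>distr Q borel (\<lambda>x. (x, x)))"
    unfolding OT_cost_def by (rule INF_lower[OF diagonal_coupling[OF Q]])
  ultimately show ?thesis by simp
qed

lemma OT_reg_div_le:
  assumes "Q \<in> Prob" "\<And>x. c (x, x) = 0" "c \<in> borel_measurable borel"
  shows "OT_reg_div D c Q P \<le> D Q P"
  unfolding OT_reg_div_def using INF_lower[OF assms(1), of "\<lambda>\<eta>. D \<eta> P + OT_cost c \<eta> Q"]
  by (simp add: OT_cost_self[OF assms])

lemma OT_cost_mono:
  assumes "\<And>z. c z \<le> c' z"
  shows "OT_cost c \<eta> Q \<le> OT_cost c' \<eta> Q"
  unfolding OT_cost_def
proof (rule INF_mono)
  fix \<pi> assume "\<pi> \<in> couplings \<eta> Q"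
  then show "\<exists>\<pi>'\<in>couplings \<eta> Q. (\<integral>\<^sup>+ z. c z \<partial>\<pi>') \<le> (\<integral>\<^sup>+ z. c' z \<partial>\<pi>)"
    using nn_integral_mono[of \<pi> c c'] assms by blast
qed

lemma OT_reg_div_mono:
  assumes "\<And>z. c z \<le> c' z"
  shows "OT_reg_div D c Q P \<le> OT_reg_div D c' Q P"
  unfolding OT_reg_div_def
proof (rule INF_mono)
  fix \<eta> :: "'a measure" assume "\<eta> \<in> Prob"
  then show "\<exists>\<eta>'\<in>Prob. D \<eta>' P + OT_cost c \<eta>' Q \<le> D \<eta> P + OT_cost c' \<eta> Q"
    using add_left_mono[OF OT_cost_mono[of c c', OF assms]] by blast
qed

lemma OT_reg_div_lessE:
  assumes "OT_reg_div D c Q P < a"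
  obtains \<eta> \<pi> where "\<eta> \<in> Prob" "\<pi> \<in> couplings \<eta> Q" "D \<eta> P < a" "(\<integral>\<^sup>+ z. c z \<partial>\<pi>) < a"
proof -
  obtain \<eta> where \<eta>: "\<eta> \<in> Prob" "D \<eta> P + OT_cost c \<eta> Q < a"
    using assms unfolding OT_reg_div_def INF_less_iff by blast
  then have "OT_cost c \<eta> Q < a"
    by (meson add_increasing order_le_less_trans zero_le order.refl)
  then obtain \<pi> where "\<pi> \<in> couplings \<eta> Q" "(\<integral>\<^sup>+ z. c z \<partial>\<pi>) < a"
    unfolding OT_cost_def INF_less_iff by blast
  moreover have "D \<eta> P < a"
    using \<eta>(2) by (meson add_increasing2 order_le_less_trans zero_le order.refl)
  ultimately show ?thesis using that \<eta>(1) by blast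
qed

lemma coupling_integral_diff_bound:
  fixes f :: "'a::metric_space \<Rightarrow> real"
  assumes \<pi>: "\<pi> \<in> couplings \<eta> Q" and f: "f \<in> borel_measurable borel" "\<And>x. \<bar>f x\<bar> \<le> B"
    and d: "\<And>x y. dist x y < d \<Longrightarrow> \<bar>f x - f y\<bar> \<le> e" and "0 \<le> e"
  shows "\<bar>(\<integral>x. f x \<partial>\<eta>) - (\<integral>x. f x \<partial>Q)\<bar> \<le> e + 2 * B * measure \<pi> {z. d \<le> dist (fst z) (snd z)}"
proof -
  define S where "S = {z :: 'a \<times> 'a. d \<le> dist (fst z) (snd z)}"
  have \<pi>P: "\<pi> \<in> Prob" and marg: "distr \<pi> borel fst = \<eta>" "distr \<pi> borel snd = Q"
    using \<pi> unfolding couplings_def by auto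
  interpret prob_space \<pi> using \<pi>P by (rule Prob_prob_space)
  have "closed S" unfolding S_def by (intro closed_Collect_le continuous_intros)
  then have S: "S \<in> sets \<pi>" using sets_Prob[OF \<pi>P] by simp
  have fst: "fst \<in> measurable \<pi> borel" and snd: "snd \<in> measurable \<pi> borel"
    using measurable_Prob[OF \<pi>P] borel_measurable_fst_snd by blast+
  have "integrable \<pi> (\<lambda>z. f (p z))" if "p \<in> measurable \<pi> borel" for p
    by (rule integrable_const_bound[where B=B]) (use f measurable_compose[OF that f(1)] in auto)
  note int = this[OF fst] this[OF snd]
  have int_S: "integrable \<pi> (indicator S :: _ \<Rightarrow> real)"
    using S by (simp add: integrable_indicator_iff emeasure_eq_measure)
  have "(\<integral>x. f x \<partial>\<eta>) - (\<integral>x. f x \<partial>Q) = (\<integral>z. f (fst z) - f (snd z) \<partial>\<pi>)"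
    using int by (simp flip: marg add: integral_distr[OF fst f(1)] integral_distr[OF snd f(1)])
  also have "\<bar>\<dots>\<bar> \<le> (\<integral>z. \<bar>f (fst z) - f (snd z)\<bar> \<partial>\<pi>)"
    by (rule integral_abs_bound)
  also have "\<dots> \<le> (\<integral>z. e + 2 * B * indicator S z \<partial>\<pi>)"
  proof (rule integral_mono)
    show "\<bar>f (fst z) - f (snd z)\<bar> \<le> e + 2 * B * indicator S z" for z
      using d[of "fst z" "snd z"] f(2)[of "fst z"] f(2)[of "snd z"] \<open>0 \<le> e\<close>
      by (cases "z \<in> S") (auto simp: S_def)
  qed (use int int_S in auto)
  also have "\<dots> = e + 2 * B * measure \<pi> S"
    using int_S S by (simp add: prob_space)
  finally show ?thesis unfolding S_def .
qed

lemma measure_le_div_if_lower_bound: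
  assumes \<pi>: "\<pi> \<in> Prob" and "S \<in> sets borel" "0 < m" and m: "\<And>z. z \<in> S \<Longrightarrow> ennreal m \<le> c z"
    and b: "(\<integral>\<^sup>+ z. c z \<partial>\<pi>) \<le> ennreal b" "0 \<le> b"
  shows "measure \<pi> S \<le> b / m"
proof -
  interpret prob_space \<pi> using \<pi> by (rule Prob_prob_space)
  have S: "S \<in> sets \<pi>" using sets_Prob[OF \<pi>] \<open>S \<in> sets borel\<close> by simp
  have "ennreal (m * measure \<pi> S) = (\<integral>\<^sup>+ z. ennreal m * indicator S z \<partial>\<pi>)"
    using S \<open>0 < m\<close> by (simp add: nn_integral_cmult_indicator emeasure_eq_measure ennreal_mult)
  also have "\<dots> \<le> (\<integral>\<^sup>+ z. c z \<partial>\<pi>)"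
    by (intro nn_integral_mono) (simp add: m indicator_def)
  also have "\<dots> \<le> ennreal b" by (rule b(1))
  finally show ?thesis
    using b(2) \<open>0 < m\<close> by (simp add: ennreal_le_iff field_simps)
qed

lemma weak_conv_seq_coupling:
  fixes c :: "'a::metric_space \<times> 'a \<Rightarrow> ennreal"
  assumes cpt: "compact (UNIV :: 'a set)" and lsc: "lsc c" and c_pos: "\<And>x y. x \<noteq> y \<Longrightarrow> 0 < c (x, y)"
    and \<pi>: "\<And>k. \<pi> k \<in> couplings (\<eta> k) (Qs k)"
    and b: "\<And>k. (\<integral>\<^sup>+ z. c z \<partial>\<pi> k) \<le> ennreal (b k)" "\<And>k. 0 \<le> b k" "b \<longlonglongrightarrow> 0"
    and conv: "weak_conv_seq Qs Q"
  shows "weak_conv_seq \<eta> Q"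
  unfolding weak_conv_seq_def
proof (intro allI impI)
  fix f :: "'a \<Rightarrow> real" assume f: "continuous_on UNIV f" "bounded (range f)"
  then obtain B where B: "\<And>x. \<bar>f x\<bar> \<le> B" unfolding bounded_iff by auto
  have "(\<lambda>k. (\<integral>x. f x \<partial>\<eta> k) - (\<integral>x. f x \<partial>Qs k)) \<longlonglongrightarrow> 0"
  proof (rule tendsto_iff[THEN iffD2], intro allI impI)
    fix e :: real assume "0 < e"
    obtain d where "0 < d" and d: "\<And>x y. dist x y < d \<Longrightarrow> \<bar>f x - f y\<bar> \<le> e / 2"
      using compact_uniformly_continuous[OF f(1) cpt] \<open>0 < e\<close>
      unfolding uniformly_continuous_on_def dist_real_def
      by (metis UNIV_I half_gt_zero dist_commute less_imp_le)
    define S where "S = {z :: 'a \<times> 'a. d \<le> dist (fst z) (snd z)}"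
    have "compact S"
      unfolding S_def using compact_Int_closed[OF compact_Times[OF cpt cpt]]
      by (simp add: closed_Collect_le continuous_intros)
    moreover have "0 < c z" if "z \<in> S" for z
    proof -
      have "fst z \<noteq> snd z" using that \<open>0 < d\<close> by (auto simp: S_def)
      then show ?thesis using c_pos by (cases z) auto
    qed
    ultimately obtain m where "0 < m" and m: "\<And>z. z \<in> S \<Longrightarrow> ennreal m \<le> c z"
      using lsc_pos_lower_bound[OF _ lsc] by metis
    have bound: "\<bar>(\<integral>x. f x \<partial>\<eta> k) - (\<integral>x. f x \<partial>Qs k)\<bar> \<le> e / 2 + 2 * B * (b k / m)" for k
    proof -
      have "closed S" unfolding S_def by (intro closed_Collect_le continuous_intros)
      then have "measure (\<pi> k) S \<le> b k / m"
        using \<pi>[of k] by (intro measure_le_div_if_lower_bound[OF _ _ \<open>0 < m\<close> m b(1,2)])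
          (auto simp: couplings_def)
      then have "2 * B * measure (\<pi> k) S \<le> 2 * B * (b k / m)"
        using B[of undefined] by (intro mult_left_mono) auto
      moreover have "\<bar>(\<integral>x. f x \<partial>\<eta> k) - (\<integral>x. f x \<partial>Qs k)\<bar> \<le> e / 2 + 2 * B * measure (\<pi> k) S"
        unfolding S_def using \<open>0 < e\<close>
        by (intro coupling_integral_diff_bound[OF \<pi> borel_measurable_continuous_onI[OF f(1)] B d])
          auto
      ultimately show ?thesis by linarith
    qed
    have "(\<lambda>k. 2 * B * (b k / m)) \<longlonglongrightarrow> 2 * B * (0 / m)"
      using \<open>0 < m\<close> by (intro tendsto_intros b(3)) auto
    then have "eventually (\<lambda>k. 2 * B * (b k / m) < e / 2) sequentially"
      using \<open>0 < e\<close> by (intro order_tendstoD(2)) auto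
    then show "eventually (\<lambda>k. dist ((\<integral>x. f x \<partial>\<eta> k) - (\<integral>x. f x \<partial>Qs k)) 0 < e) sequentially"
    proof (rule eventually_mono)
      fix k assume "2 * B * (b k / m) < e / 2"
      then show "dist ((\<integral>x. f x \<partial>\<eta> k) - (\<integral>x. f x \<partial>Qs k)) 0 < e" using bound[of k] by simp
    qed
  qed
  from tendsto_add[OF this weak_conv_seqD[OF conv f]]
  show "(\<lambda>k. \<integral>x. f x \<partial>\<eta> k) \<longlonglongrightarrow> (\<integral>x. f x \<partial>Q)" by simp
qed

section \<open>Compact metric spaces as continuous images of compact sets of reals\<close>

text \<open>A digit sequence \<open>i\<close> with \<open>i n < m n\<close> is coded by the real number
  \<open>\<Sum>n. 2 i(n) / \<Prod>k\<le>n. 3 m(k)\<close>. The factor 3 leaves gaps between the codes of different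
  digits, so that codes closer than \<open>cantor_gap m N\<close> share their first \<open>N + 1\<close> digits.\<close>

definition cantor_denom :: "(nat \<Rightarrow> nat) \<Rightarrow> nat \<Rightarrow> real" where
  "cantor_denom m n = (\<Prod>k<n. 3 * real (m k))"

definition cantor_gap :: "(nat \<Rightarrow> nat) \<Rightarrow> nat \<Rightarrow> real" where
  "cantor_gap m n = 1 / cantor_denom m (Suc n)"

definition cantor_term :: "(nat \<Rightarrow> nat) \<Rightarrow> (nat \<Rightarrow> nat) \<Rightarrow> nat \<Rightarrow> real" where
  "cantor_term m i n = 2 * real (i n) * cantor_gap m n"

definition cantor_code :: "(nat \<Rightarrow> nat) \<Rightarrow> (nat \<Rightarrow> nat) \<Rightarrow> real" where
  "cantor_code m i = (\<Sum>n. cantor_term m i n)"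

context
  fixes m :: "nat \<Rightarrow> nat"
  assumes mpos: "\<And>n. 0 < m n"
begin

lemma cantor_denom_Suc: "cantor_denom m (Suc n) = 3 * real (m n) * cantor_denom m n"
  unfolding cantor_denom_def by (simp add: mult.commute)

lemma cantor_denom_ge: "3 ^ j * cantor_denom m n \<le> cantor_denom m (n + j)"
proof (induction j)
  case 0 then show ?case by simp
next
  case (Suc j)
  have m1: "1 \<le> real (m (n + j))" using mpos[of "n+j"] by simp
  have "3 ^ Suc j * cantor_denom m n = 3 * (3 ^ j * cantor_denom m n)" by simp
  also have "\<dots> \<le> 3 * cantor_denom m (n + j)" using Suc by simp
  also have "\<dots> \<le> 3 * real (m (n + j)) * cantor_denom m (n + j)"
  proof -
    have "0 \<le> cantor_denom m (n + j)" unfolding cantor_denom_def by (intro prod_nonneg) auto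
    then show ?thesis using m1 by (simp add: mult_right_mono)
  qed
  also have "\<dots> = cantor_denom m (n + Suc j)" by (simp add: cantor_denom_Suc)
  finally show ?case .
qed

lemma cantor_denom_pos: "0 < cantor_denom m n"
  unfolding cantor_denom_def using mpos by (intro prod_pos) auto

lemma cantor_denom_ge_pow: "3 ^ n \<le> cantor_denom m n"
  using cantor_denom_ge[of n 0] by (simp add: cantor_denom_def)

lemma cantor_gap_pos: "0 < cantor_gap m n"
  unfolding cantor_gap_def using cantor_denom_pos by simp

lemma cantor_gap_le: "cantor_gap m n \<le> (1/3) ^ Suc n"
proof -
  have "3 ^ Suc n \<le> cantor_denom m (Suc n)" by (rule cantor_denom_ge_pow)
  then have "1 / cantor_denom m (Suc n) \<le> 1 / 3 ^ Suc n"
    by (intro divide_left_mono) (auto simp: cantor_denom_pos)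
  then show ?thesis unfolding cantor_gap_def by (simp add: power_one_over)
qed

lemma cantor_gap_antimono: "n \<le> n' \<Longrightarrow> cantor_gap m n' \<le> cantor_gap m n"
proof -
  assume "n \<le> n'"
  then obtain j where j: "n' = n + j" using le_Suc_ex by blast
  have "cantor_denom m (Suc n) \<le> 3 ^ j * cantor_denom m (Suc n)"
    using cantor_denom_pos[of "Suc n"] by simp
  also have "\<dots> \<le> cantor_denom m (Suc n + j)" by (rule cantor_denom_ge)
  finally have "cantor_denom m (Suc n) \<le> cantor_denom m (Suc n')" using j by simp
  then show ?thesis unfolding cantor_gap_def
    by (intro divide_left_mono) (auto simp: cantor_denom_pos)
qed

lemma cantor_gap_tendsto_0: "cantor_gap m \<longlonglongrightarrow> 0"
proof -
  have "(\<lambda>n. (1/3::real) ^ Suc n) \<longlonglongrightarrow> 0"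
    by (intro LIMSEQ_Suc LIMSEQ_power_zero) simp
  then show ?thesis
    by (rule Lim_null_comparison[rotated])
      (use cantor_gap_le cantor_gap_pos in \<open>auto intro!: always_eventually simp: less_imp_le\<close>)
qed

lemma cantor_term_bounds:
  assumes "\<And>n. i n < m n"
  shows "0 \<le> cantor_term m i k" "cantor_term m i k \<le> 2 / (3 * cantor_denom m k)"
proof -
  show "0 \<le> cantor_term m i k" unfolding cantor_term_def using cantor_gap_pos[of k] by simp
  have "real (i k) \<le> real (m k)" using assms[of k] by simp
  then have "cantor_term m i k \<le> 2 * real (m k) * cantor_gap m k"
    unfolding cantor_term_def using cantor_gap_pos[of k] by (simp add: mult_right_mono)
  also have "\<dots> = 2 / (3 * cantor_denom m k)"
    unfolding cantor_gap_def cantor_denom_Suc using mpos[of k] cantor_denom_pos[of k]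
      by (simp add: field_simps)
  finally show "cantor_term m i k \<le> 2 / (3 * cantor_denom m k)" .
qed

lemma cantor_term_le_geometric:
  assumes "\<And>n. i n < m n"
  shows "cantor_term m i (Suc n + j) \<le> (2/3) * cantor_gap m n * (1/3) ^ j"
proof -
  have "cantor_term m i (Suc n + j) \<le> 2 / (3 * cantor_denom m (Suc n + j))"
    by (rule cantor_term_bounds(2)[OF assms])
  also have "\<dots> \<le> 2 / (3 * (3 ^ j * cantor_denom m (Suc n)))"
    using cantor_denom_ge[of j "Suc n"] cantor_denom_pos[of "Suc n"] cantor_denom_pos[of "Suc n + j"]
      by (intro divide_left_mono mult_left_mono) auto
  also have "\<dots> = (2/3) * cantor_gap m n * (1/3) ^ j"
    unfolding cantor_gap_def by (simp add: field_simps power_one_over)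
  finally show ?thesis .
qed

lemma cantor_term_le_pow:
  assumes "\<And>n. i n < m n"
  shows "cantor_term m i n \<le> (2/3) * (1/3) ^ n"
proof -
  have "cantor_term m i n \<le> 2 / (3 * cantor_denom m n)" by (rule cantor_term_bounds(2)[OF assms])
  also have "\<dots> \<le> 2 / (3 * 3 ^ n)"
    using cantor_denom_ge_pow[of n] cantor_denom_pos[of n]
      by (intro divide_left_mono mult_left_mono) auto
  also have "\<dots> = (2/3) * (1/3) ^ n" by (simp add: power_one_over)
  finally show ?thesis .
qed

lemma summable_cantor_term:
  assumes "\<And>n. i n < m n"
  shows "summable (cantor_term m i)"
proof (rule summable_comparison_test')
  show "summable (\<lambda>n. (2/3) * (1/3::real) ^ n)"
    by (intro summable_mult summable_geometric) simp
  show "norm (cantor_term m i n) \<le> (2/3) * (1/3) ^ n" for n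
    using cantor_term_bounds(1)[OF assms, of n] cantor_term_le_pow[OF assms, of n] by simp
qed

definition cantor_tail :: "(nat \<Rightarrow> nat) \<Rightarrow> nat \<Rightarrow> real" where
  "cantor_tail i n = (\<Sum>j. cantor_term m i (j + Suc n))"

lemma cantor_code_split:
  assumes "\<And>n. i n < m n"
  shows "cantor_code m i = cantor_tail i n + (\<Sum>k<Suc n. cantor_term m i k)"
  unfolding cantor_code_def cantor_tail_def
    by (rule suminf_split_initial_segment[OF summable_cantor_term[OF assms]])

lemma cantor_tail_bounds:
  assumes "\<And>n. i n < m n"
  shows "0 \<le> cantor_tail i n" "cantor_tail i n \<le> cantor_gap m n"
proof -
  have s1: "summable (\<lambda>j. cantor_term m i (j + Suc n))"
    using summable_cantor_term[OF assms] by (subst summable_iff_shift) 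
  show "0 \<le> cantor_tail i n" unfolding cantor_tail_def
    by (rule suminf_nonneg[OF s1]) (rule cantor_term_bounds(1)[OF assms])
  have gs: "(\<lambda>j. (2/3) * cantor_gap m n * (1/3::real) ^ j)
      sums ((2/3) * cantor_gap m n * (1 / (1 - 1/3)))"
    by (intro sums_mult geometric_sums) simp
  have "cantor_tail i n \<le> (\<Sum>j. (2/3) * cantor_gap m n * (1/3::real) ^ j)"
    unfolding cantor_tail_def
  proof (rule suminf_le[OF _ s1 sums_summable[OF gs]])
    fix j show "cantor_term m i (j + Suc n) \<le> (2/3) * cantor_gap m n * (1/3) ^ j"
      using cantor_term_le_geometric[OF assms, of n j] by (simp add: add.commute)
  qed
  also have "\<dots> = cantor_gap m n" using sums_unique[OF gs] by simp
  finally show "cantor_tail i n \<le> cantor_gap m n" .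
qed

lemma cantor_code_dist_le:
  assumes "\<And>n. i n < m n" "\<And>n. i' n < m n" "\<And>k. k \<le> n \<Longrightarrow> i k = i' k"
  shows "\<bar>cantor_code m i - cantor_code m i'\<bar> \<le> cantor_gap m n"
proof -
  have "(\<Sum>k<Suc n. cantor_term m i k) = (\<Sum>k<Suc n. cantor_term m i' k)"
    by (rule sum.cong) (auto simp: cantor_term_def assms(3))
  then have "cantor_code m i - cantor_code m i' = cantor_tail i n - cantor_tail i' n"
    using cantor_code_split[OF assms(1), of n] cantor_code_split[OF assms(2), of n] by simp
  then show ?thesis
    using cantor_tail_bounds[OF assms(1), of n] cantor_tail_bounds[OF assms(2), of n] by linarith
qed

lemma cantor_code_gap:
  assumes "\<And>n. i n < m n" "\<And>n. i' n < m n" "\<And>k. k < n \<Longrightarrow> i k = i' k" "i n < i' n"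
  shows "cantor_gap m n \<le> cantor_code m i' - cantor_code m i"
proof -
  have "(\<Sum>k<n. cantor_term m i k) = (\<Sum>k<n. cantor_term m i' k)"
    by (rule sum.cong) (auto simp: cantor_term_def assms(3))
  then have "cantor_code m i' - cantor_code m i
      = cantor_tail i' n - cantor_tail i n + (cantor_term m i' n - cantor_term m i n)"
    using cantor_code_split[OF assms(1), of n] cantor_code_split[OF assms(2), of n] by simp
  moreover have "2 * cantor_gap m n \<le> cantor_term m i' n - cantor_term m i n"
  proof -
    have "1 \<le> real (i' n) - real (i n)" using assms(4) by linarith
    then have "1 * (2 * cantor_gap m n) \<le> (real (i' n) - real (i n)) * (2 * cantor_gap m n)"
      using cantor_gap_pos[of n] by (intro mult_right_mono) auto
    then show ?thesis unfolding cantor_term_def by (simp add: algebra_simps)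
  qed
  ultimately show ?thesis
    using cantor_tail_bounds[OF assms(1), of n] cantor_tail_bounds[OF assms(2), of n] by linarith
qed

lemma cantor_code_eq_prefix:
  assumes "\<And>n. i n < m n" "\<And>n. i' n < m n" "\<bar>cantor_code m i - cantor_code m i'\<bar> < cantor_gap m N"
  shows "k \<le> N \<Longrightarrow> i k = i' k"
proof -
  have "n \<le> Suc N \<longrightarrow> (\<forall>k<n. i k = i' k)" for n
  proof (induction n)
    case 0 then show ?case by simp
  next
    case (Suc n)
    show ?case
    proof
      assume n: "Suc n \<le> Suc N"
      then have pre: "\<forall>k<n. i k = i' k" using Suc by simp
      have "i n = i' n"
      proof (rule ccontr)
        assume ne: "i n \<noteq> i' n"
        have wn: "cantor_gap m N \<le> cantor_gap m n" using n by (intro cantor_gap_antimono) simp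
        show False
        proof (cases "i n < i' n")
          case True
          have "cantor_gap m n \<le> cantor_code m i' - cantor_code m i"
            by (rule cantor_code_gap[OF assms(1,2)]) (use pre True in auto)
          then show False using assms(3) wn by linarith
        next
          case False
          then have "i' n < i n" using ne by simp
          have "cantor_gap m n \<le> cantor_code m i - cantor_code m i'"
            by (rule cantor_code_gap[OF assms(2,1)]) (use pre \<open>i' n < i n\<close> in auto)
          then show False using assms(3) wn by linarith
        qed
      qed
      then show "\<forall>k<Suc n. i k = i' k" using pre less_Suc_eq by auto
    qed
  qed
  then show "k \<le> N \<Longrightarrow> i k = i' k" by auto
qed

lemma cantor_code_inj:
  assumes "\<And>n. i n < m n" "\<And>n. i' n < m n" "cantor_code m i = cantor_code m i'"
  shows "i = i'"
proof
  fix k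
  show "i k = i' k"
    by (rule cantor_code_eq_prefix[OF assms(1,2), of k]) (use assms(3) cantor_gap_pos in auto)
qed

lemma cantor_code_bounds:
  assumes "\<And>n. i n < m n"
  shows "0 \<le> cantor_code m i" "cantor_code m i \<le> 1"
proof -
  show "0 \<le> cantor_code m i" unfolding cantor_code_def
    by (rule suminf_nonneg[OF summable_cantor_term[OF assms] cantor_term_bounds(1)[OF assms]])
  have gs: "(\<lambda>n. (2/3) * (1/3::real) ^ n) sums ((2/3) * (1 / (1 - 1/3)))"
    by (intro sums_mult geometric_sums) simp
  have "cantor_code m i \<le> (\<Sum>n. (2/3) * (1/3::real) ^ n)"
    unfolding cantor_code_def
    by (rule suminf_le[OF cantor_term_le_pow[OF assms] summable_cantor_term[OF assms]
          sums_summable[OF gs]])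
  also have "\<dots> = 1" using sums_unique[OF gs] by simp
  finally show "cantor_code m i \<le> 1" .
qed

end


lemma compact_cantor_code_image:
  assumes mpos: "\<And>n. 0 < m n"
  shows "compact (cantor_code m ` {i. (\<forall>n. i n < m n) \<and> (\<forall>n n'. R n n' (i n) (i n'))})"
    (is "compact (_ ` ?V)")
proof -
  have VB: "i \<in> ?V \<Longrightarrow> i n < m n" for i n by blast
  have "bounded (cantor_code m ` ?V)"
    unfolding bounded_iff
  proof (intro exI ballI)
    fix y assume "y \<in> cantor_code m ` ?V"
    then obtain i where "i \<in> ?V" "y = cantor_code m i" by blast
    then show "norm y \<le> 1" using cantor_code_bounds[of m, OF mpos VB[OF \<open>i \<in> ?V\<close>]] by auto
  qed
  moreover have "closed (cantor_code m ` ?V)"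
    unfolding closed_sequential_limits
  proof (intro allI impI, elim conjE)
    fix y l assume yV: "\<forall>n. y n \<in> cantor_code m ` ?V" and yl: "y \<longlonglongrightarrow> l"
    have "\<forall>j. \<exists>i. i \<in> ?V \<and> y j = cantor_code m i" using yV by blast
    from choice[OF this] obtain I where I: "\<And>j. I j \<in> ?V" "\<And>j. y j = cantor_code m (I j)"
      by blast
    have "\<exists>N. \<forall>a\<ge>N. \<forall>b\<ge>N. dist (y a) (y b) < cantor_gap m n" for n
      using metric_CauchyD[OF LIMSEQ_imp_Cauchy[OF yl] cantor_gap_pos[of m, OF mpos]] by blast
    then obtain Nf where Nf: "\<And>n a b. a \<ge> Nf n \<Longrightarrow> b \<ge> Nf n \<Longrightarrow> dist (y a) (y b) < cantor_gap m n"
      by metis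
    have agree: "I a k = I b k" if "a \<ge> Nf n" "b \<ge> Nf n" "k \<le> n" for a b n k
      using cantor_code_eq_prefix[of m, OF mpos VB[OF I(1)[of a]] VB[OF I(1)[of b]], of n k]
        Nf[OF that(1,2)] I(2) that(3)
      by (simp add: dist_real_def)
    define i where "i n = I (Nf n) n" for n
    define Mx where "Mx n = Max (Nf ` {..n})" for n
    have Ii: "I j k = i k" if "j \<ge> Mx n" "k \<le> n" for j k n
    proof -
      have "Nf k \<le> Mx n" unfolding Mx_def using that(2) by (intro Max_ge) auto
      then show ?thesis unfolding i_def
        using agree[where a=j and b="Nf k" and n=k and k=k] that(1) by simp
    qed
    have iV: "i \<in> ?V"
    proof (intro CollectI conjI allI)
      fix n n'
      show "i n < m n" unfolding i_def using VB[OF I(1)] by blast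
      define j where "j = Mx (max n n')"
      have "I j n = i n" "I j n' = i n'"
        using Ii[of "max n n'" j] unfolding j_def by auto
      moreover have "R n n' (I j n) (I j n')" using I(1)[of j] by blast
      ultimately show "R n n' (i n) (i n')" by simp
    qed
    have "y \<longlonglongrightarrow> cantor_code m i"
    proof (rule tendsto_iff[THEN iffD2], intro allI impI)
      fix e :: real assume "0 < e"
      from order_tendstoD(2)[OF cantor_gap_tendsto_0[of m, OF mpos] this]
      obtain n where n: "cantor_gap m n < e"
        unfolding eventually_sequentially by auto
      have "\<bar>cantor_code m (I j) - cantor_code m i\<bar> \<le> cantor_gap m n" if "Mx n \<le> j" for j
        by (rule cantor_code_dist_le[of m, OF mpos VB[OF I(1)] VB[OF iV]]) (use Ii that in auto)
      then show "eventually (\<lambda>j. dist (y j) (cantor_code m i) < e) sequentially"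
        unfolding eventually_sequentially dist_real_def I(2) using n
          by (blast intro: order.strict_trans1)
    qed
    then show "l \<in> cantor_code m ` ?V" using LIMSEQ_unique[OF yl] iV by blast
  qed
  ultimately show ?thesis using compact_eq_bounded_closed by blast
qed

lemma compact_finite_nets:
  assumes cpt: "compact (UNIV :: 'a::metric_space set)" and r: "\<And>n. 0 < r n"
  obtains m :: "nat \<Rightarrow> nat" and c :: "nat \<Rightarrow> nat \<Rightarrow> 'a::metric_space"
  where "\<And>n. 0 < m n" "\<And>n x. \<exists>j<m n. dist x (c n j) < r n"
proof -
  have "\<exists>cs::'a list. cs \<noteq> [] \<and> (\<forall>x. \<exists>j<length cs. dist x (cs ! j) < r n)" for n
  proof -
    obtain k where k: "finite k" "(UNIV::'a set) \<subseteq> (\<Union>x\<in>k. ball x (r n))"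
      using cpt r[of n] unfolding compact_eq_totally_bounded by metis
    obtain cs where cs: "set cs = k" using finite_list[OF k(1)] by blast
    have "\<exists>j<length cs. dist x (cs ! j) < r n" for x
    proof -
      obtain y where "y \<in> k" "x \<in> ball y (r n)" using k(2) by blast
      then obtain j where "j < length cs" "cs ! j = y" using cs by (metis in_set_conv_nth)
      then show ?thesis using \<open>x \<in> ball y (r n)\<close> by (auto simp: dist_commute)
    qed
    moreover have "cs \<noteq> []" using calculation[of undefined] by auto
    ultimately show ?thesis by blast
  qed
  then obtain cs :: "nat \<Rightarrow> 'a list" where "\<And>n. cs n \<noteq> []"
    "\<And>n x. \<exists>j<length (cs n). dist x (cs n ! j) < r n"
    by metis
  then show ?thesis using that[of "\<lambda>n. length (cs n)" "\<lambda>n j. cs n ! j"] by blast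
qed

lemma complete_dist_le_pow_convergent:
  fixes x :: "nat \<Rightarrow> 'a::metric_space"
  assumes "Topological_Spaces.complete (UNIV :: 'a set)"
    and d: "\<And>n n'. dist (x n) (x n') \<le> (1/2)^n + (1/2)^n'"
  obtains l where "x \<longlonglongrightarrow> l" "\<And>n. dist (x n) l \<le> (1/2)^n"
proof -
  have "Cauchy x"
  proof (rule metric_CauchyI)
    fix e :: real assume "0 < e"
    then obtain M where M: "(1/2::real) ^ M < e/2" using real_arch_pow_inv[of "e/2" "1/2"] by auto
    have "dist (x a) (x b) < e" if "M \<le> a" "M \<le> b" for a b
    proof -
      have "(1/2::real)^a \<le> (1/2)^M" "(1/2::real)^b \<le> (1/2)^M"
        using that by (auto intro: power_decreasing)
      then show ?thesis using d[of a b] M by linarith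
    qed
    then show "\<exists>M. \<forall>a\<ge>M. \<forall>b\<ge>M. dist (x a) (x b) < e" by blast
  qed
  then obtain l where l: "x \<longlonglongrightarrow> l" using assms(1) unfolding complete_def by blast
  have "dist (x n) l \<le> (1/2)^n" for n
  proof -
    have "(\<lambda>n'. dist (x n) (x n')) \<longlonglongrightarrow> dist (x n) l"
      by (intro tendsto_intros l)
    moreover have "(\<lambda>n'. (1/2::real)^n + (1/2)^n') \<longlonglongrightarrow> (1/2)^n + 0"
      by (intro tendsto_intros LIMSEQ_power_zero) simp
    ultimately have "dist (x n) l \<le> (1/2)^n + 0"
      by (rule LIMSEQ_le) (use d in auto)
    then show ?thesis by simp
  qed
  with l that show ?thesis by blast
qed

lemma net_address:
  fixes c :: "nat \<Rightarrow> nat \<Rightarrow> 'a::metric_space"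
  assumes cov: "\<And>n. \<exists>j<m n. dist x (c n j) < (1/2) ^ n"
  obtains i where "\<And>n. i n < m n" "\<And>n n'. dist (c n (i n)) (c n' (i n')) \<le> (1/2)^n + (1/2)^n'"
    "(\<lambda>n. c n (i n)) \<longlonglongrightarrow> x"
proof -
  define i where "i n = (SOME j. j < m n \<and> dist x (c n j) < (1/2) ^ n)" for n
  have i: "i n < m n \<and> dist x (c n (i n)) < (1/2) ^ n" for n
    unfolding i_def by (rule someI_ex) (rule cov)
  have "dist (c n (i n)) (c n' (i n')) \<le> (1/2)^n + (1/2)^n'" for n n'
    using dist_triangle[of "c n (i n)" "c n' (i n')" x] i[of n] i[of n'] by (simp add: dist_commute)
  moreover have "(\<lambda>n. c n (i n)) \<longlonglongrightarrow> x"
  proof (rule tendsto_dist_iff[THEN iffD2], rule Lim_null_comparison)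
    show "eventually (\<lambda>n. norm (dist (c n (i n)) x) \<le> (1/2)^n) sequentially"
      using i by (intro always_eventually) (simp add: dist_commute less_imp_le)
    show "(\<lambda>n. (1/2::real)^n) \<longlonglongrightarrow> 0" by (rule LIMSEQ_power_zero) simp
  qed
  ultimately show ?thesis using that i by blast
qed

lemma compact_metric_continuous_image_of_compact_real:
  assumes cpt: "compact (UNIV :: 'a::metric_space set)"
  obtains K :: "real set" and h :: "real \<Rightarrow> 'a::metric_space"
  where "compact K" "continuous_on K h" "h ` K = UNIV"
proof -
  obtain m and c :: "nat \<Rightarrow> nat \<Rightarrow> 'a" where mpos: "\<And>n. 0 < m n"
    and cov: "\<And>n x. \<exists>j<m n. dist x (c n j) < (1/2) ^ n"
    using compact_finite_nets[OF cpt, of "\<lambda>n. (1/2) ^ n"] by auto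
  define V where
    "V = {i. (\<forall>n. i n < m n) \<and> (\<forall>n n'. dist (c n (i n)) (c n' (i n')) \<le> (1/2)^n + (1/2)^n')}"
  have VB: "i \<in> V \<Longrightarrow> i n < m n" for i n unfolding V_def by auto
  define h0 where "h0 i = lim (\<lambda>n. c n (i n))" for i
  have h0: "(\<lambda>n. c n (i n)) \<longlonglongrightarrow> h0 i \<and> (\<forall>n. dist (c n (i n)) (h0 i) \<le> (1/2)^n)" if "i \<in> V" for i
  proof -
    have "dist (c n (i n)) (c n' (i n')) \<le> (1/2)^n + (1/2)^n'" for n n'
      using that unfolding V_def by blast
    then obtain l where "(\<lambda>n. c n (i n)) \<longlonglongrightarrow> l" "\<And>n. dist (c n (i n)) l \<le> (1/2)^n"
      using complete_dist_le_pow_convergent[OF compact_imp_complete[OF cpt], of "\<lambda>n. c n (i n)"]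
      by blast
    then show ?thesis unfolding h0_def by (simp add: limI)
  qed
  then have h0_lim: "i \<in> V \<Longrightarrow> (\<lambda>n. c n (i n)) \<longlonglongrightarrow> h0 i"
    and h0_dist: "i \<in> V \<Longrightarrow> dist (c n (i n)) (h0 i) \<le> (1/2)^n" for i n
    by blast+
  define K where "K = cantor_code m ` V"
  have inj: "inj_on (cantor_code m) V"
    by (rule inj_onI) (rule cantor_code_inj[of m, OF mpos], (auto intro: VB))
  define h where "h y = h0 (inv_into V (cantor_code m) y)" for y
  have ht: "h (cantor_code m i) = h0 i" if "i \<in> V" for i
    unfolding h_def using inv_into_f_f[OF inj that] by simp
  have surj: "h ` K = UNIV"
  proof (intro set_eqI iffI)
    fix x :: 'a
    obtain i where "\<And>n. i n < m n" "\<And>n n'. dist (c n (i n)) (c n' (i n')) \<le> (1/2)^n + (1/2)^n'"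
      and lim: "(\<lambda>n. c n (i n)) \<longlonglongrightarrow> x"
      using net_address[OF cov] by blast
    then have iV: "i \<in> V" unfolding V_def by blast
    then have "h0 i = x" using LIMSEQ_unique[OF h0_lim[OF iV] lim] by simp
    then show "x \<in> h ` K" unfolding K_def using ht[OF iV] iV by force
  qed simp
  have cont: "continuous_on K h"
    unfolding continuous_on_iff
  proof (intro ballI allI impI)
    fix y e assume "y \<in> K" "0 < (e::real)"
    then obtain i where iV: "i \<in> V" and y: "y = cantor_code m i" unfolding K_def by blast
    obtain N where N: "(1/2::real) ^ N < e/2"
      using real_arch_pow_inv[of "e/2" "1/2"] \<open>0 < e\<close> by auto
    show "\<exists>d>0. \<forall>y'\<in>K. dist y' y < d \<longrightarrow> dist (h y') (h y) < e"
    proof (intro exI conjI ballI impI)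
      show "0 < cantor_gap m N" by (rule cantor_gap_pos[of m, OF mpos])
      fix y' assume "y' \<in> K" "dist y' y < cantor_gap m N"
      then obtain i' where i'V: "i' \<in> V" and y': "y' = cantor_code m i'" unfolding K_def by blast
      have "\<bar>cantor_code m i' - cantor_code m i\<bar> < cantor_gap m N"
        using \<open>dist y' y < cantor_gap m N\<close> y y'
        by (simp add: dist_real_def)
      from cantor_code_eq_prefix[of m, OF mpos VB[OF i'V] VB[OF iV] this, where k=N]
      have "i' N = i N" by simp
      then have "dist (h0 i') (h0 i) \<le> dist (h0 i') (c N (i' N)) + dist (c N (i N)) (h0 i)"
        using dist_triangle[of "h0 i'" "h0 i" "c N (i N)"] by simp
      also have "\<dots> \<le> (1/2)^N + (1/2)^N"
        using h0_dist[OF i'V, of N] h0_dist[OF iV, of N] by (simp add: dist_commute)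
      finally show "dist (h y') (h y) < e" using N y y' ht iV i'V by simp
    qed
  qed
  have "compact K"
    unfolding K_def V_def by (rule compact_cantor_code_image[OF mpos])
  then show ?thesis using that cont surj by blast
qed

lemma Borel_section_of_continuous_surj:
  fixes h :: "real \<Rightarrow> 'a::metric_space"
  assumes K: "compact K" and hc: "continuous_on K h" and hK: "h ` K = UNIV"
  obtains s where "s \<in> borel_measurable borel" "\<And>x. s x \<in> K" "\<And>x. h (s x) = x"
proof -
  define P where "P x = K \<inter> h -` {x}" for x
  define s where "s x = Inf (P x)" for x
  have Kc: "closed K" using K compact_imp_closed by blast
  have bK: "bdd_below K" using compact_imp_bounded[OF K] by (rule bounded_imp_bdd_below)
  have Pne: "P x \<noteq> {}" for x
  proof -
    have "x \<in> h ` K" using hK by simp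
    then show ?thesis unfolding P_def by blast
  qed
  have Pc: "closed (P x)" for x unfolding P_def by (rule continuous_closed_preimage[OF hc Kc]) simp
  have Pb: "bdd_below (P x)" for x using bK unfolding P_def by (meson bdd_below_mono inf_le1)
  have sP: "s x \<in> P x" for x unfolding s_def by (rule closed_contains_Inf[OF Pne Pb Pc])
  have sK: "s x \<in> K" for x using sP[of x] unfolding P_def by blast
  have hs: "h (s x) = x" for x using sP[of x] unfolding P_def by blast
  have "s \<in> borel_measurable borel"
    unfolding borel_measurable_iff_le
  proof
    fix a
    have eq: "{w \<in> space borel. s w \<le> a} = h ` (K \<inter> {..a})"
    proof (intro set_eqI iffI)
      fix x assume "x \<in> {w \<in> space borel. s w \<le> a}"
      then have "s x \<le> a" by simp
      then show "x \<in> h ` (K \<inter> {..a})" using sK[of x] hs[of x] by force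
    next
      fix x assume "x \<in> h ` (K \<inter> {..a})"
      then obtain y where y: "y \<in> K" "y \<le> a" "x = h y" by auto
      then have "y \<in> P x" unfolding P_def by simp
      then have "s x \<le> y" unfolding s_def by (rule cInf_lower[OF _ Pb])
      then show "x \<in> {w \<in> space borel. s w \<le> a}" using y by simp
    qed
    have "compact (K \<inter> {..a})" using K by (intro compact_Int_closed) auto
    moreover have "continuous_on (K \<inter> {..a}) h" by (rule continuous_on_subset[OF hc]) auto
    ultimately have "compact (h ` (K \<inter> {..a}))"
      using compact_continuous_image by blast
    then have "closed (h ` (K \<inter> {..a}))" by (rule compact_imp_closed)
    then show "{w \<in> space borel. s w \<le> a} \<in> sets borel" unfolding eq by simp
  qed
  then show ?thesis using that sK hs by blast
qed


section \<open>Prokhorov's theorem on compact metric spaces\<close>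

lemma tight_if_AE_bounded:
  assumes \<nu>: "\<And>n. real_distribution (\<nu> n)" and "bounded K" and K: "\<And>n. AE x in \<nu> n. x \<in> K"
  shows "tight \<nu>"
proof -
  obtain B where B: "\<And>x. x \<in> K \<Longrightarrow> \<bar>x\<bar> \<le> B" using \<open>bounded K\<close> unfolding bounded_iff by auto
  show ?thesis
    unfolding tight_def
  proof (intro conjI allI impI exI)
    show "real_distribution (\<nu> n)" for n by (rule \<nu>)
    show "- \<bar>B\<bar> - 1 < \<bar>B\<bar>" by simp
    fix e :: real and n assume "0 < e"
    interpret real_distribution "\<nu> n" by (rule \<nu>)
    have "AE x in \<nu> n. x \<in> {- \<bar>B\<bar> - 1<..\<bar>B\<bar>}"
      using K[of n] by eventually_elim (use B in \<open>force simp: abs_le_iff\<close>)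
    then have "measure (\<nu> n) {- \<bar>B\<bar> - 1<..\<bar>B\<bar>} = 1" by (subst prob_eq_1) auto
    then show "1 - e < measure (\<nu> n) {- \<bar>B\<bar> - 1<..\<bar>B\<bar>}" using \<open>0 < e\<close> by simp
  qed
qed

lemma weak_conv_m_AE_closed:
  assumes \<nu>: "\<And>n. real_distribution (\<nu> n)" and M: "real_distribution M" and conv: "weak_conv_m \<nu> M"
    and K: "closed K" "K \<noteq> {}" and \<nu>K: "\<And>n. AE x in \<nu> n. x \<in> K"
  shows "AE x in M. x \<in> K"
proof -
  interpret M: real_distribution M by (rule M)
  define g where "g x = min 1 (infdist x K)" for x
  have g_cont: "continuous_on UNIV g" unfolding g_def by (intro continuous_intros)
  have g_meas: "g \<in> borel_measurable borel" by (rule borel_measurable_continuous_onI[OF g_cont])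
  have g_bnd: "\<bar>g x\<bar> \<le> 1" for x unfolding g_def using infdist_nonneg[of x K] by auto
  have "(\<integral>x. g x \<partial>\<nu> n) = (\<integral>x. 0 \<partial>\<nu> n)" for n
  proof (rule integral_cong_AE)
    show "g \<in> borel_measurable (\<nu> n)"
      using measurable_sets_borel[OF real_distribution.events_eq_borel[OF \<nu>] g_meas] .
    show "AE x in \<nu> n. g x = 0" by (rule eventually_mono[OF \<nu>K[of n]]) (simp add: g_def)
  qed simp
  then have "(\<lambda>n. 0::real) \<longlonglongrightarrow> (\<integral>x. g x \<partial>M)"
    using weak_conv_imp_integral_bdd_continuous_conv[OF \<nu> M conv, of g 1] g_cont g_bnd
    by (simp add: continuous_on_eq_continuous_at)
  then have "(\<integral>x. g x \<partial>M) = 0" by (simp add: LIMSEQ_const_iff)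
  moreover have "integrable M g"
    by (rule M.integrable_const_bound[where B=1]) (use g_bnd g_meas in auto)
  moreover have "AE x in M. 0 \<le> g x" by (rule AE_I2) (simp add: g_def infdist_nonneg)
  ultimately have "AE x in M. g x = 0" using integral_nonneg_eq_0_iff_AE by blast
  then show ?thesis
  proof (rule eventually_mono)
    fix x assume "g x = 0"
    then have "infdist x K = 0" unfolding g_def by (auto simp: min_def split: if_splits)
    then show "x \<in> K" using in_closed_iff_infdist_zero[OF K] by simp
  qed
qed

lemma weak_conv_seq_distr_if_continuous_on_support:
  fixes h :: "real \<Rightarrow> 'a::metric_space"
  assumes \<nu>: "\<And>n. real_distribution (\<nu> n)" and M: "real_distribution M" and conv: "weak_conv_m \<nu> M"
    and "closed K" and h: "continuous_on K h" "h \<in> borel_measurable borel"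
    and \<nu>K: "\<And>n. AE x in \<nu> n. x \<in> K" and MK: "AE x in M. x \<in> K"
  shows "weak_conv_seq (\<lambda>n. distr (\<nu> n) borel h) (distr M borel h)"
  unfolding weak_conv_seq_def
proof (intro allI impI)
  fix f :: "'a \<Rightarrow> real" assume f: "continuous_on UNIV f" "bounded (range f)"
  then obtain B where "0 < B" and B: "\<And>x. \<bar>f x\<bar> \<le> B" unfolding bounded_pos by auto
  have fm: "f \<in> borel_measurable borel" by (rule borel_measurable_continuous_onI[OF f(1)])
  obtain F where Fc: "continuous_on UNIV F" and FK: "\<And>x. x \<in> K \<Longrightarrow> F x = f (h x)"
    and FB: "\<And>x. x \<in> UNIV \<Longrightarrow> norm (F x) \<le> B"
  proof -
    have "continuous_on K (\<lambda>x. f (h x))" by (rule continuous_on_compose2[OF f(1) h(1)]) auto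
    moreover have "closedin (top_of_set UNIV) K" using \<open>closed K\<close> by simp
    ultimately show ?thesis
      using Tietze[OF _ _ less_imp_le[OF \<open>0 < B\<close>], of K "\<lambda>x. f (h x)" UNIV] B that by auto
  qed
  have F_eq: "(\<integral>x. F x \<partial>N) = (\<integral>x. f x \<partial>distr N borel h)"
    if "real_distribution N" "AE x in N. x \<in> K" for N
  proof -
    have sets_N: "sets N = sets borel" using real_distribution.events_eq_borel[OF that(1)] .
    have "(\<integral>x. F x \<partial>N) = (\<integral>x. f (h x) \<partial>N)"
    proof (rule integral_cong_AE)
      show "F \<in> borel_measurable N"
        by (rule measurable_sets_borel[OF sets_N borel_measurable_continuous_onI[OF Fc]])
      show "(\<lambda>x. f (h x)) \<in> borel_measurable N"
        by (rule measurable_sets_borel[OF sets_N measurable_compose[OF h(2) fm]])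
      show "AE x in N. F x = f (h x)" by (rule eventually_mono[OF that(2)]) (simp add: FK)
    qed
    also have "\<dots> = (\<integral>x. f x \<partial>distr N borel h)"
      by (rule integral_distr[symmetric]) (use measurable_sets_borel[OF sets_N h(2)] fm in auto)
    finally show ?thesis .
  qed
  have "(\<lambda>n. \<integral>x. F x \<partial>\<nu> n) \<longlonglongrightarrow> (\<integral>x. F x \<partial>M)"
    using weak_conv_imp_integral_bdd_continuous_conv[OF \<nu> M conv, of F B] Fc FB
    by (simp add: continuous_on_eq_continuous_at)
  then show "(\<lambda>n. \<integral>x. f x \<partial>distr (\<nu> n) borel h) \<longlonglongrightarrow> (\<integral>x. f x \<partial>distr M borel h)"
    using F_eq[OF \<nu> \<nu>K] F_eq[OF M MK] by simp
qed

text \<open>Helly's selection theorem on the real line suffices: the space is a continuous image of a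
  compact set of reals with a Borel section, so measures can be moved to the reals and back.\<close>

lemma Prokhorov_compact:
  fixes \<mu> :: "nat \<Rightarrow> 'a::metric_space measure"
  assumes cpt: "compact (UNIV::'a set)" and \<mu>: "\<And>n. \<mu> n \<in> Prob"
  obtains r \<mu>' where "strict_mono r" "\<mu>' \<in> Prob" "weak_conv_seq (\<lambda>k. \<mu> (r k)) \<mu>'"
proof -
  obtain K :: "real set" and h :: "real \<Rightarrow> 'a" where K: "compact K" and hc: "continuous_on K h"
    and hK: "h ` K = UNIV"
    using compact_metric_continuous_image_of_compact_real[OF cpt] by blast
  obtain s where sm: "s \<in> borel_measurable borel" and sK: "\<And>x. s x \<in> K" and hs: "\<And>x. h (s x) = x"
    using Borel_section_of_continuous_surj[OF K hc hK] by blast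
  have "K \<noteq> {}" using sK by blast
  have Kc: "closed K" using K compact_imp_closed by blast
  then have Kb: "K \<in> sets borel" by simp
  obtain x0 where x0: "x0 \<in> K" using \<open>K \<noteq> {}\<close> by blast
  define h' where "h' x = (if x \<in> K then h x else h x0)" for x
  have h'm: "h' \<in> borel_measurable borel"
    unfolding h'_def by (rule borel_measurable_continuous_on_if[OF Kb hc continuous_on_const])
  have h'c: "continuous_on K h'"
    using hc by (rule continuous_on_cong[THEN iffD1, rotated 2]) (simp_all add: h'_def)
  define \<nu> where "\<nu> n = distr (\<mu> n) borel s" for n
  have s\<mu>: "s \<in> measurable (\<mu> n) borel" for n by (rule measurable_Prob[OF \<mu> sm])
  have \<nu>: "real_distribution (\<nu> n)" for n
  proof -
    interpret prob_space "\<mu> n" by (rule Prob_prob_space[OF \<mu>])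
    show ?thesis unfolding \<nu>_def using s\<mu>[of n] by simp
  qed
  have \<nu>K: "AE x in \<nu> n. x \<in> K" for n
    unfolding \<nu>_def using sK Kb by (subst AE_distr_iff[OF s\<mu>]) auto
  have \<mu>_eq: "\<mu> n = distr (\<nu> n) borel h'" for n
  proof -
    have "distr (\<nu> n) borel h' = distr (\<mu> n) borel (\<lambda>x. h' (s x))"
      unfolding \<nu>_def by (rule distr_distr[OF h'm s\<mu>, unfolded comp_def])
    also have "\<dots> = distr (\<mu> n) borel (\<lambda>x. x)"
      by (rule distr_cong) (simp_all add: h'_def sK hs)
    also have "\<dots> = \<mu> n" by (rule distr_id2[OF sets_Prob[OF \<mu>, symmetric]])
    finally show ?thesis by simp
  qed
  have "tight \<nu>" by (rule tight_if_AE_bounded[OF \<nu> compact_imp_bounded[OF K] \<nu>K])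
  then obtain r M where r: "strict_mono r" and M: "real_distribution M"
    and "weak_conv_m (\<nu> \<circ> id \<circ> r) M"
    using tight_imp_convergent_subsubsequence[OF _ strict_mono_id] by blast
  then have conv: "weak_conv_m (\<lambda>k. \<nu> (r k)) M" by (simp add: comp_def)
  interpret M: real_distribution M by (rule M)
  have MK: "AE x in M. x \<in> K"
    by (rule weak_conv_m_AE_closed[OF _ M conv Kc \<open>K \<noteq> {}\<close>]) (use \<nu> \<nu>K in auto)
  have "distr M borel h' \<in> Prob"
    unfolding Prob_def
    using M.prob_space_distr[OF measurable_sets_borel[OF M.events_eq_borel h'm]] by simp
  moreover have "weak_conv_seq (\<lambda>k. \<mu> (r k)) (distr M borel h')"
    unfolding \<mu>_eq using \<nu> \<nu>K
    by (intro weak_conv_seq_distr_if_continuous_on_support[OF _ M conv Kc h'c h'm _ MK]) auto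
  ultimately show ?thesis using that r by blast
qed

section \<open>Convergence of the optimal-transport-regularised values\<close>

lemma ennreal_le_divide_if_mult_less:
  fixes x :: ennreal
  assumes "ennreal r * x < ennreal a" "0 < r"
  shows "x \<le> ennreal (a / r)"
proof (cases x)
  case (real i)
  then have "ennreal (r * i) < ennreal a" using assms by (simp add: ennreal_mult)
  then have "r * i < a" using real \<open>0 < r\<close> by (subst (asm) ennreal_less_iff) auto
  then show ?thesis using real \<open>0 < r\<close> by (auto intro!: ennreal_leI simp: field_simps)
next
  case top
  then show ?thesis using assms by (simp add: ennreal_mult_top)
qed

lemma OT_reg_div_scaled_leE:
  assumes div: "OT_reg_div D (\<lambda>z. ennreal r * c z) Q P \<le> ennreal \<epsilon>" and "1 \<le> r" "0 \<le> \<epsilon>"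
    and c: "c \<in> borel_measurable borel"
  obtains \<eta> \<pi> where "\<eta> \<in> Prob" "\<pi> \<in> couplings \<eta> Q" "D \<eta> P \<le> ennreal (\<epsilon> + 1 / r)"
    "(\<integral>\<^sup>+ z. c z \<partial>\<pi>) \<le> ennreal ((\<epsilon> + 1) / r)"
proof -
  have "ennreal \<epsilon> < ennreal (\<epsilon> + 1 / r)"
    using \<open>1 \<le> r\<close> \<open>0 \<le> \<epsilon>\<close> by (simp add: ennreal_less_iff)
  with div have "OT_reg_div D (\<lambda>z. ennreal r * c z) Q P < ennreal (\<epsilon> + 1 / r)"
    by (rule le_less_trans)
  then obtain \<eta> \<pi> where \<eta>: "\<eta> \<in> Prob" "\<pi> \<in> couplings \<eta> Q" "D \<eta> P < ennreal (\<epsilon> + 1 / r)"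
    and cost: "(\<integral>\<^sup>+ z. ennreal r * c z \<partial>\<pi>) < ennreal (\<epsilon> + 1 / r)"
    by (rule OT_reg_div_lessE)
  have "(\<integral>\<^sup>+ z. ennreal r * c z \<partial>\<pi>) = ennreal r * (\<integral>\<^sup>+ z. c z \<partial>\<pi>)"
    using \<eta>(2) by (intro nn_integral_cmult measurable_Prob[OF _ c]) (simp add: couplings_def)
  with cost have "ennreal r * (\<integral>\<^sup>+ z. c z \<partial>\<pi>) < ennreal (\<epsilon> + 1 / r)" by simp
  then have "(\<integral>\<^sup>+ z. c z \<partial>\<pi>) \<le> ennreal ((\<epsilon> + 1 / r) / r)"
    using \<open>1 \<le> r\<close> by (intro ennreal_le_divide_if_mult_less) auto
  also have "\<dots> \<le> ennreal ((\<epsilon> + 1) / r)"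
    using \<open>1 \<le> r\<close> \<open>0 \<le> \<epsilon>\<close> by (intro ennreal_leI divide_right_mono) (auto simp: field_simps)
  finally show ?thesis using that \<eta> less_imp_le by blast
qed

lemma SUP_expect_D_le_OT_reg_div:
  assumes "lsc c" and c_diag: "\<And>x. c (x, x) = 0"
  shows "(SUP Q\<in>{Q \<in> Prob. D Q P \<le> ennreal \<epsilon>}. expect Q L)
    \<le> (SUP Q\<in>{Q \<in> Prob. OT_reg_div D (\<lambda>z. ennreal r * c z) Q P \<le> ennreal \<epsilon>}. expect Q L)"
proof (rule SUP_subset_mono[OF _ order.refl], rule subsetI)
  fix Q assume Q: "Q \<in> {Q \<in> Prob. D Q P \<le> ennreal \<epsilon>}"
  have [measurable]: "c \<in> borel_measurable borel" by (rule lsc_borel_measurable[OF \<open>lsc c\<close>])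
  have "OT_reg_div D (\<lambda>z. ennreal r * c z) Q P \<le> D Q P"
    by (rule OT_reg_div_le) (use Q c_diag in auto)
  then show "Q \<in> {Q \<in> Prob. OT_reg_div D (\<lambda>z. ennreal r * c z) Q P \<le> ennreal \<epsilon>}" using Q by auto
qed

lemma SUP_expect_OT_reg_div_antimono:
  assumes "r \<le> r'"
  shows "(SUP Q\<in>{Q \<in> Prob. OT_reg_div D (\<lambda>z. ennreal r' * c z) Q P \<le> ennreal \<epsilon>}. expect Q L)
    \<le> (SUP Q\<in>{Q \<in> Prob. OT_reg_div D (\<lambda>z. ennreal r * c z) Q P \<le> ennreal \<epsilon>}. expect Q L)"
proof (rule SUP_subset_mono[OF _ order.refl], rule subsetI)
  fix Q assume Q: "Q \<in> {Q \<in> Prob. OT_reg_div D (\<lambda>z. ennreal r' * c z) Q P \<le> ennreal \<epsilon>}"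
  have "OT_reg_div D (\<lambda>z. ennreal r * c z) Q P \<le> OT_reg_div D (\<lambda>z. ennreal r' * c z) Q P"
    using assms by (intro OT_reg_div_mono mult_right_mono ennreal_leI) auto
  then show "Q \<in> {Q \<in> Prob. OT_reg_div D (\<lambda>z. ennreal r * c z) Q P \<le> ennreal \<epsilon>}" using Q by auto
qed

lemma D_weak_limit_le_if_OT_reg_div_le:
  fixes P :: "'a::metric_space measure" and c :: "'a \<times> 'a \<Rightarrow> ennreal"
  assumes cpt: "compact (UNIV :: 'a set)" and lscD: "weak_lsc (\<lambda>Q. D Q P)"
    and lsc: "lsc c" and c_pos: "\<And>x y. x \<noteq> y \<Longrightarrow> 0 < c (x, y)" and "0 \<le> \<epsilon>"
    and Qs: "\<And>n. OT_reg_div D (\<lambda>z. ennreal (real (Suc n)) * c z) (Qs n) P \<le> ennreal \<epsilon>"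
    and s: "strict_mono s" and Q': "Q' \<in> Prob" and conv: "weak_conv_seq (\<lambda>k. Qs (s k)) Q'"
  shows "D Q' P \<le> ennreal \<epsilon>"
proof -
  have "\<exists>\<eta> \<pi>. \<eta> \<in> Prob \<and> \<pi> \<in> couplings \<eta> (Qs n) \<and> D \<eta> P \<le> ennreal (\<epsilon> + 1 / real (Suc n))
      \<and> (\<integral>\<^sup>+ z. c z \<partial>\<pi>) \<le> ennreal ((\<epsilon> + 1) / real (Suc n))" for n
    by (rule OT_reg_div_scaled_leE[OF Qs _ \<open>0 \<le> \<epsilon>\<close> lsc_borel_measurable[OF lsc]]) auto
  then obtain \<eta> \<pi> where \<eta>: "\<And>n. \<eta> n \<in> Prob" "\<And>n. \<pi> n \<in> couplings (\<eta> n) (Qs n)"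
    "\<And>n. D (\<eta> n) P \<le> ennreal (\<epsilon> + 1 / real (Suc n))"
    "\<And>n. (\<integral>\<^sup>+ z. c z \<partial>\<pi> n) \<le> ennreal ((\<epsilon> + 1) / real (Suc n))"
    by metis
  have inv_lim: "(\<lambda>k. a / real (Suc (s k))) \<longlonglongrightarrow> 0" for a :: real
    using LIMSEQ_subseq_LIMSEQ[OF LIMSEQ_Suc[OF lim_const_over_n[of a]] s] by (simp add: comp_def)
  have "weak_conv_seq (\<lambda>k. \<eta> (s k)) Q'"
    by (rule weak_conv_seq_coupling[OF cpt lsc c_pos \<eta>(2) \<eta>(4) _ inv_lim conv])
      (use \<open>0 \<le> \<epsilon>\<close> in auto)
  moreover have "(\<lambda>k. ennreal (\<epsilon> + 1 / real (Suc (s k)))) \<longlonglongrightarrow> ennreal (\<epsilon> + 0)"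
    by (intro tendsto_ennrealI tendsto_add tendsto_const inv_lim)
  ultimately have "D Q' P \<le> ennreal (\<epsilon> + 0)"
    by (rule weak_lsc_le_lim[OF lscD Q' \<eta>(1) _ \<eta>(3)])
  then show ?thesis by simp
qed

lemma ex_SUP_expect_OT_reg_div_less:
  fixes P :: "'a::metric_space measure" and c :: "'a \<times> 'a \<Rightarrow> ennreal"
  assumes cpt: "compact (UNIV :: 'a set)" and usc: "usc L" and L_fin: "\<And>x. L x \<noteq> \<infinity>"
    and lscD: "weak_lsc (\<lambda>Q. D Q P)" and lsc: "lsc c" and c_pos: "\<And>x y. x \<noteq> y \<Longrightarrow> 0 < c (x, y)"
    and "0 \<le> \<epsilon>" and less: "(SUP Q\<in>{Q \<in> Prob. D Q P \<le> ennreal \<epsilon>}. expect Q L) < y"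
  shows "\<exists>r. (SUP Q\<in>{Q \<in> Prob. OT_reg_div D (\<lambda>z. ennreal r * c z) Q P \<le> ennreal \<epsilon>}. expect Q L) < y"
    (is "\<exists>r. ?S r < y")
proof (rule ccontr)
  assume "\<nexists>r. ?S r < y"
  then have ge: "y \<le> ?S r" for r by (simp add: not_less)
  obtain y' where y': "(SUP Q\<in>{Q \<in> Prob. D Q P \<le> ennreal \<epsilon>}. expect Q L) < y'" "y' < y"
    using dense[OF less] by blast
  have "\<exists>Q. Q \<in> Prob \<and> OT_reg_div D (\<lambda>z. ennreal (real (Suc n)) * c z) Q P \<le> ennreal \<epsilon>
      \<and> y' < expect Q L" for n
  proof -
    have "y' < ?S (real (Suc n))" using y'(2) ge by (rule less_le_trans)
    then show ?thesis unfolding less_SUP_iff by blast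
  qed
  then obtain Qs where Qs: "\<And>n. Qs n \<in> Prob"
    "\<And>n. OT_reg_div D (\<lambda>z. ennreal (real (Suc n)) * c z) (Qs n) P \<le> ennreal \<epsilon>"
    "\<And>n. y' < expect (Qs n) L"
    by metis
  obtain s Q' where s: "strict_mono s" and Q': "Q' \<in> Prob" and conv: "weak_conv_seq (\<lambda>k. Qs (s k)) Q'"
    by (rule Prokhorov_compact[OF cpt Qs(1)])
  have "D Q' P \<le> ennreal \<epsilon>"
    by (rule D_weak_limit_le_if_OT_reg_div_le[OF cpt lscD lsc c_pos \<open>0 \<le> \<epsilon>\<close> Qs(2) s Q' conv])
  obtain M where M: "0 \<le> M" "\<And>x. L x \<le> ereal M" using usc_bounded_above[OF cpt usc L_fin] by blast
  have "y' \<le> expect Q' L"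
    by (rule expect_ge_of_weak_conv_usc[OF usc M(2) M(1) Q' Qs(1) conv])
      (use Qs(3) less_imp_le in blast)
  also have "\<dots> \<le> (SUP Q\<in>{Q \<in> Prob. D Q P \<le> ennreal \<epsilon>}. expect Q L)"
    using Q' \<open>D Q' P \<le> ennreal \<epsilon>\<close> by (intro SUP_upper) simp
  finally show False using y'(1) by simp
qed

lemma tendsto_SUP_expect_OT_reg_div:
  fixes P :: "'a::metric_space measure" and c :: "'a \<times> 'a \<Rightarrow> ennreal"
  assumes "compact (UNIV :: 'a set)" "usc L" "\<And>x. L x \<noteq> \<infinity>" "weak_lsc (\<lambda>Q. D Q P)" "lsc c"
    and c0: "\<And>x y. c (x, y) = 0 \<longleftrightarrow> x = y" and "0 \<le> \<epsilon>"
  shows "((\<lambda>r. SUP Q\<in>{Q \<in> Prob. OT_reg_div D (\<lambda>z. ennreal r * c z) Q P \<le> ennreal \<epsilon>}. expect Q L)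
    \<longlongrightarrow> (SUP Q\<in>{Q \<in> Prob. D Q P \<le> ennreal \<epsilon>}. expect Q L)) at_top"
    (is "(?S \<longlongrightarrow> ?S\<^sub>D) at_top")
proof (rule order_tendstoI)
  fix a assume "a < ?S\<^sub>D"
  moreover have "?S\<^sub>D \<le> ?S r" for r
    by (rule SUP_expect_D_le_OT_reg_div[OF \<open>lsc c\<close>]) (simp add: c0)
  ultimately show "eventually (\<lambda>r. a < ?S r) at_top"
    by (intro always_eventually allI) (rule less_le_trans)
next
  fix a assume "?S\<^sub>D < a"
  have "\<And>x y. x \<noteq> y \<Longrightarrow> 0 < c (x, y)"
    using c0 by (simp add: zero_less_iff_neq_zero)
  from ex_SUP_expect_OT_reg_div_less[where L=L and D=D and P=P and c=c, OF assms(1-5) this \<open>0 \<le> \<epsilon>\<close> \<open>?S\<^sub>D < a\<close>]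
  obtain r\<^sub>0 where "?S r\<^sub>0 < a" ..
  then have "?S r < a" if "r\<^sub>0 \<le> r" for r
    using SUP_expect_OT_reg_div_antimono[OF that] by (rule le_less_trans[rotated])
  then show "eventually (\<lambda>r. ?S r < a) at_top"
    unfolding eventually_at_top_linorder by blast
qed

lemma tendsto_INF_if_tendsto_ge:
  fixes f :: "'i \<Rightarrow> 'r \<Rightarrow> 'a::{complete_linorder, linorder_topology}"
  assumes ge: "\<And>\<theta> r. \<theta> \<in> \<Theta> \<Longrightarrow> l \<theta> \<le> f \<theta> r" and lim: "\<And>\<theta>. \<theta> \<in> \<Theta> \<Longrightarrow> (f \<theta> \<longlongrightarrow> l \<theta>) F"
  shows "((\<lambda>r. INF \<theta>\<in>\<Theta>. f \<theta> r) \<longlongrightarrow> (INF \<theta>\<in>\<Theta>. l \<theta>)) F"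
proof (rule order_tendstoI)
  fix a assume "a < (INF \<theta>\<in>\<Theta>. l \<theta>)"
  moreover have "(INF \<theta>\<in>\<Theta>. l \<theta>) \<le> (INF \<theta>\<in>\<Theta>. f \<theta> r)" for r
    by (rule INF_superset_mono[OF order.refl]) (erule ge)
  ultimately show "eventually (\<lambda>r. a < (INF \<theta>\<in>\<Theta>. f \<theta> r)) F"
    by (intro always_eventually allI) (rule less_le_trans)
next
  fix a assume "(INF \<theta>\<in>\<Theta>. l \<theta>) < a"
  then obtain \<theta> where "\<theta> \<in> \<Theta>" "l \<theta> < a" unfolding INF_less_iff by blast
  then have "eventually (\<lambda>r. f \<theta> r < a) F" using lim order_tendstoD(2) by blast
  then show "eventually (\<lambda>r. (INF \<theta>\<in>\<Theta>. f \<theta> r) < a) F"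
    by (rule eventually_mono) (use INF_lower[OF \<open>\<theta> \<in> \<Theta>\<close>] in \<open>rule le_less_trans\<close>)
qed

theorem theorem9:
  fixes P :: "'a::polish_space measure"
    and L :: "'a \<Rightarrow> ereal"
    and D :: "'a measure \<Rightarrow> 'a measure \<Rightarrow> ennreal"
    and c :: "'a \<times> 'a \<Rightarrow> ennreal"
    and \<Theta> :: "'b set"
    and LL :: "'b \<Rightarrow> 'a \<Rightarrow> ereal"
    and \<epsilon> :: real
  assumes "compact (UNIV :: 'a set)"
    and "usc L" and "\<forall>x. L x \<noteq> \<infinity>"
    and "P \<in> Prob"
    and "pre_divergence D"
    and "weak_lsc (\<lambda>Q. D Q P)"
    and "cost_function c"
    and "\<forall>x1 x2. c (x1, x2) = 0 \<longleftrightarrow> x1 = x2"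
    and "\<forall>\<theta>\<in>\<Theta>. usc (LL \<theta>) \<and> (\<forall>x. LL \<theta> x \<noteq> \<infinity>)"
    and "\<epsilon> > 0"
  shows "((\<lambda>r::real. SUP Q\<in>{Q \<in> Prob. OT_reg_div D (\<lambda>z. ennreal r * c z) Q P \<le> ennreal \<epsilon>}. expect Q L)
            \<longlongrightarrow> (SUP Q\<in>{Q \<in> Prob. D Q P \<le> ennreal \<epsilon>}. expect Q L)) at_top
       \<and> ((\<lambda>r::real. INF \<theta>\<in>\<Theta>. SUP Q\<in>{Q \<in> Prob. OT_reg_div D (\<lambda>z. ennreal r * c z) Q P \<le> ennreal \<epsilon>}. expect Q (LL \<theta>))
            \<longlongrightarrow> (INF \<theta>\<in>\<Theta>. SUP Q\<in>{Q \<in> Prob. D Q P \<le> ennreal \<epsilon>}. expect Q (LL \<theta>))) at_top"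
proof
  show "((\<lambda>r::real. SUP Q\<in>{Q \<in> Prob. OT_reg_div D (\<lambda>z. ennreal r * c z) Q P \<le> ennreal \<epsilon>}. expect Q L)
            \<longlongrightarrow> (SUP Q\<in>{Q \<in> Prob. D Q P \<le> ennreal \<epsilon>}. expect Q L)) at_top"
    by (rule tendsto_SUP_expect_OT_reg_div) (use assms in \<open>auto simp: cost_function_def\<close>)
next
  have "((\<lambda>r. SUP Q\<in>{Q \<in> Prob. OT_reg_div D (\<lambda>z. ennreal r * c z) Q P \<le> ennreal \<epsilon>}. expect Q (LL \<theta>))
      \<longlongrightarrow> (SUP Q\<in>{Q \<in> Prob. D Q P \<le> ennreal \<epsilon>}. expect Q (LL \<theta>))) at_top" if "\<theta> \<in> \<Theta>" for \<theta>
    by (rule tendsto_SUP_expect_OT_reg_div) (use assms that in \<open>auto simp: cost_function_def\<close>)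
  moreover have "(SUP Q\<in>{Q \<in> Prob. D Q P \<le> ennreal \<epsilon>}. expect Q (LL \<theta>))
      \<le> (SUP Q\<in>{Q \<in> Prob. OT_reg_div D (\<lambda>z. ennreal r * c z) Q P \<le> ennreal \<epsilon>}. expect Q (LL \<theta>))" for \<theta> r
    by (rule SUP_expect_D_le_OT_reg_div) (use assms in \<open>auto simp: cost_function_def\<close>)
  ultimately show "((\<lambda>r::real. INF \<theta>\<in>\<Theta>. SUP Q\<in>{Q \<in> Prob. OT_reg_div D (\<lambda>z. ennreal r * c z) Q P \<le> ennreal \<epsilon>}. expect Q (LL \<theta>))
      \<longlongrightarrow> (INF \<theta>\<in>\<Theta>. SUP Q\<in>{Q \<in> Prob. D Q P \<le> ennreal \<epsilon>}. expect Q (LL \<theta>))) at_top"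
    by (intro tendsto_INF_if_tendsto_ge)
qed

end
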